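(* In the setting described in the context, with exact data $w^n=(v(t^n),u(t^n))$, under assumptions (A1), (A2) and the standing restrictions $0<\varepsilon\le\varepsilon_0<1$, $\Delta t\ge\varepsilon$, the approximation $$u_h^{n+1}=u^n+\Delta t\Big(\frac1\varepsilon\tilde v^n_x+\frac{1-\varepsilon}{\varepsilon^2}\frac{d}{dx}v_h^{n+1}+g^n\Big)$$ satisfies $\|u_h^{n+1}-u(t^{n+1})\|_{L^2}=O\big(\Delta t^2+\frac{\varepsilon^4}{\Delta x^2}+\varepsilon^2\big)$.
   Context: Setting. $\Omega=[0,1]$, $g$ given. $(v,u)$ solves $v_t-u_x=0$, $u_t-\varepsilon^{-2}v_x=g$ on $\Omega\times\mathbb{R}^+$ with $v=0$ on $\partial\Omega$. $t^n=n\Delta t$, superscript $n$ means evaluation at $t^n$. $\gamma=\Delta t^2(1-\varepsilon)^2/\varepsilon^2$, $a(v,\varphi)=\int_\Omega(\gamma v_x\varphi_x+v\varphi)dx$. Uniform mesh $\Omega_i=[x_i,x_{i+1}]$, $i=1,\dots,N_x$, width $\Delta x$, midpoints $\bar x_i$; $v_i^n=v(\bar x_i,t^n)$, $u_i^n=u(\bar x_i,t^n)$, $g_i^n=g(\bar x_i,t^n)$. On $\Omega_i$: $\tilde v^n_x=\frac1{2\Delta x}\big(v^n_{i+1}-v^n_{i-1}+\frac{\Delta x}{\Delta t}(u^n_{i+1}+u^n_{i-1}-2u^n_i)\big)$, $\tilde u^n_x=\frac1{2\Delta x}\big(u^n_{i+1}-u^n_{i-1}+\frac{\Delta x}{\Delta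 t}(v^n_{i+1}+v^n_{i-1}-2v^n_i)\big)$, $\iota_{1,h}=v_i^n+\Delta t\,\tilde u^n_x$, $\iota_{2,h}=g_i^n+\varepsilon^{-1}\tilde v^n_x$; $\iota_h(\varphi)=\int_\Omega\iota_{1,h}\varphi-\Delta t^2(1-\varepsilon)\iota_{2,h}\varphi_x\,dx$. $V_h$: continuous piecewise linear functions on the mesh vanishing at $0,1$; $v_h^{n+1}\in V_h$ solves $a(v_h^{n+1},\varphi_h)=\iota_h(\varphi_h)$ for all $\varphi_h\in V_h$. (A1) $u,v$ sufficiently smooth with $v=\varepsilon^2v^{(2)}+O(\varepsilon^3)$, $u_x=\varepsilon^2u^{(2)}_x+O(\varepsilon^3)$ in the norm $\|\varphi\|_{C^1}=\|\varphi\|_\infty+\|\nabla_{x,t}\varphi\|_\infty$, with $\varepsilon$-independent smooth $v^{(2)},u^{(2)}$. (A2) $\Delta t=\widehat{\mathrm{CFL}}\,\Delta x$ with fixed $0<\widehat{\mathrm{CFL}}<1$. $O(\cdot)$: bounded by a constant independent of $\varepsilon,\Delta t,\Delta x$ times the expression. *)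

theory Defs
  imports "HOL-Analysis.Analysis"
begin

text \<open>Functions of two real variables are written \<open>f x t\<close> (space first, time second).\<close>

definition px :: "(real \<Rightarrow> real \<Rightarrow> real) \<Rightarrow> real \<Rightarrow> real \<Rightarrow> real" where
  "px f = (\<lambda>x t. deriv (\<lambda>y. f y t) x)"

definition pt :: "(real \<Rightarrow> real \<Rightarrow> real) \<Rightarrow> real \<Rightarrow> real \<Rightarrow> real" where
  "pt f = (\<lambda>x t. deriv (\<lambda>s. f x s) t)"

fun Ck :: "nat \<Rightarrow> (real \<Rightarrow> real \<Rightarrow> real) \<Rightarrow> bool" where
  "Ck 0 f = continuous_on UNIV (\<lambda>p. f (fst p) (snd p))"
| "Ck (Suc k) f = ((\<forall>p. (\<lambda>q. f (fst q) (snd q)) differentiable (at p))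
                     \<and> Ck k (px f) \<and> Ck k (pt f))"

definition smooth2 :: "(real \<Rightarrow> real \<Rightarrow> real) \<Rightarrow> bool" where
  "smooth2 f \<longleftrightarrow> (\<forall>k. Ck k f)"

text \<open>Iterated partial derivatives: True = d/dx, False = d/dt.\<close>
fun pd :: "bool list \<Rightarrow> (real \<Rightarrow> real \<Rightarrow> real) \<Rightarrow> real \<Rightarrow> real \<Rightarrow> real" where
  "pd [] f = f"
| "pd (b # bs) f = (if b then px else pt) (pd bs f)"

definition bounded_derivs :: "(real \<Rightarrow> real \<Rightarrow> real) \<Rightarrow> bool" where
  "bounded_derivs f \<longleftrightarrow> (\<forall>ds. \<exists>B. \<forall>x t. 0 \<le> t \<longrightarrow> \<bar>pd ds f x t\<bar> \<le> B)"

text \<open>Cells \<open>\<Omega>_i = [x_i, x_{i+1}]\<close>, \<open>i = 1..N\<close>, \<open>x_i = (i-1) dx\<close>; midpoints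
  \<open>xbar_i = (i - 1/2) dx\<close> (i = 0 and i = N+1 are the ghost midpoints outside \<open>\<Omega>\<close>).\<close>
definition node :: "real \<Rightarrow> nat \<Rightarrow> real" where
  "node dx i = (real i - 1) * dx"

definition mid :: "real \<Rightarrow> nat \<Rightarrow> real" where
  "mid dx i = (real i - 1 / 2) * dx"

definition cell :: "real \<Rightarrow> real \<Rightarrow> nat" where
  "cell dx x = nat \<lfloor>x / dx\<rfloor> + 1"

definition vtx :: "real \<Rightarrow> real \<Rightarrow> (real \<Rightarrow> real \<Rightarrow> real) \<Rightarrow> (real \<Rightarrow> real \<Rightarrow> real)
                    \<Rightarrow> real \<Rightarrow> nat \<Rightarrow> real" where
  "vtx dt dx v u tn i = 1 / (2 * dx) *
     (v (mid dx (i + 1)) tn - v (mid dx (i - 1)) tn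
      + dx / dt * (u (mid dx (i + 1)) tn + u (mid dx (i - 1)) tn - 2 * u (mid dx i) tn))"

definition utx :: "real \<Rightarrow> real \<Rightarrow> (real \<Rightarrow> real \<Rightarrow> real) \<Rightarrow> (real \<Rightarrow> real \<Rightarrow> real)
                    \<Rightarrow> real \<Rightarrow> nat \<Rightarrow> real" where
  "utx dt dx v u tn i = 1 / (2 * dx) *
     (u (mid dx (i + 1)) tn - u (mid dx (i - 1)) tn
      + dx / dt * (v (mid dx (i + 1)) tn + v (mid dx (i - 1)) tn - 2 * v (mid dx i) tn))"

definition iota1 :: "real \<Rightarrow> real \<Rightarrow> (real \<Rightarrow> real \<Rightarrow> real) \<Rightarrow> (real \<Rightarrow> real \<Rightarrow> real)
                    \<Rightarrow> real \<Rightarrow> nat \<Rightarrow> real" where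
  "iota1 dt dx v u tn i = v (mid dx i) tn + dt * utx dt dx v u tn i"

definition iota2 :: "real \<Rightarrow> real \<Rightarrow> real \<Rightarrow> (real \<Rightarrow> real \<Rightarrow> real) \<Rightarrow> (real \<Rightarrow> real \<Rightarrow> real)
                    \<Rightarrow> (real \<Rightarrow> real \<Rightarrow> real) \<Rightarrow> real \<Rightarrow> nat \<Rightarrow> real" where
  "iota2 eps dt dx v u g tn i = g (mid dx i) tn + (1 / eps) * vtx dt dx v u tn i"

text \<open>\<open>V_h\<close>: continuous piecewise linear functions on the uniform mesh with N cells of
  [0,1], vanishing at 0 and 1 (only the restriction to [0,1] matters).\<close>
definition Vh :: "nat \<Rightarrow> (real \<Rightarrow> real) set" where
  "Vh N = {\<phi>. continuous_on {0..1} \<phi> \<and> \<phi> 0 = 0 \<and> \<phi> 1 = 0 \<and>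
              (\<forall>i\<in>{1..N}. \<exists>a b. \<forall>x\<in>{node (1 / real N) i..node (1 / real N) (Suc i)}.
                  \<phi> x = a * x + b)}"

definition gam :: "real \<Rightarrow> real \<Rightarrow> real" where
  "gam eps dt = dt\<^sup>2 * (1 - eps)\<^sup>2 / eps\<^sup>2"

definition aform :: "real \<Rightarrow> real \<Rightarrow> (real \<Rightarrow> real) \<Rightarrow> (real \<Rightarrow> real) \<Rightarrow> real" where
  "aform eps dt w \<phi> = integral {0..1} (\<lambda>x. gam eps dt * deriv w x * deriv \<phi> x + w x * \<phi> x)"

definition iota_h :: "real \<Rightarrow> real \<Rightarrow> real \<Rightarrow> (real \<Rightarrow> real \<Rightarrow> real) \<Rightarrow> (real \<Rightarrow> real \<Rightarrow> real)
                    \<Rightarrow> (real \<Rightarrow> real \<Rightarrow> real) \<Rightarrow> real \<Rightarrow> (real \<Rightarrow> real) \<Rightarrow> real" where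
  "iota_h eps dt dx v u g tn \<phi> = integral {0..1} (\<lambda>x.
      iota1 dt dx v u tn (cell dx x) * \<phi> x
      - dt\<^sup>2 * (1 - eps) * iota2 eps dt dx v u g tn (cell dx x) * deriv \<phi> x)"

text \<open>\<open>u_h^{n+1}\<close> built from exact data at \<open>t^n\<close> and the discrete \<open>v_h^{n+1}\<close>.\<close>
definition uh :: "real \<Rightarrow> real \<Rightarrow> real \<Rightarrow> (real \<Rightarrow> real \<Rightarrow> real) \<Rightarrow> (real \<Rightarrow> real \<Rightarrow> real)
                    \<Rightarrow> (real \<Rightarrow> real \<Rightarrow> real) \<Rightarrow> real \<Rightarrow> (real \<Rightarrow> real) \<Rightarrow> real \<Rightarrow> real" where
  "uh eps dt dx v u g tn vh x = u x tn + dt * ((1 / eps) * vtx dt dx v u tn (cell dx x)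
      + (1 - eps) / eps\<^sup>2 * deriv vh x + g x tn)"

definition L2norm01 :: "(real \<Rightarrow> real) \<Rightarrow> real" where
  "L2norm01 f = sqrt (integral {0..1} (\<lambda>x. (f x)\<^sup>2))"

end

theory Submission
  imports Defs
begin

text \<open>The update of \<open>u\<close> would be exact if \<open>d/dx v\<^sub>h\<^sup>n\<^sup>+\<^sup>1\<close> equalled a slope \<open>T\<close> read off
  from the exact solution, and \<open>u\<^sub>h\<^sup>n\<^sup>+\<^sup>1 - u(t\<^sup>n\<^sup>+\<^sup>1) = \<Delta>t (1 - \<epsilon>)/\<epsilon>\<^sup>2 (d/dx v\<^sub>h\<^sup>n\<^sup>+\<^sup>1 - T)\<close>.
  Compare \<open>v\<^sub>h\<^sup>n\<^sup>+\<^sup>1\<close> with the nodal interpolant \<open>I\<close> of \<open>v(t\<^sup>n\<^sup>+\<^sup>1)\<close>: by (A1) every first derivative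
  of \<open>v\<close> and \<open>u\<^sub>x\<close> is \<open>\<epsilon>\<^sup>2\<close> times a bounded quantity up to \<open>O(\<epsilon>\<^sup>3)\<close>, so together with the PDE,
  \<open>\<epsilon> \<le> \<Delta>t\<close> and the CFL condition one gets \<open>(d/dx I) - T = O(\<epsilon>\<^sup>2 \<Delta>t)\<close>.  For \<open>E = v\<^sub>h\<^sup>n\<^sup>+\<^sup>1 - I\<close>,
  Galerkin orthogonality writes \<open>a(E, E)\<close> as the pairing of \<open>E\<close> with an \<open>O(\<epsilon>\<^sup>2 \<Delta>t)\<close> residual
  plus the pairing of \<open>E'\<close> with a flux that is constant up to \<open>O(\<Delta>t\<^sup>3)\<close>; the constant drops
  out because \<open>\<integral> E' = 0\<close> on \<open>V\<^sub>h\<close>.  Young's inequality then bounds \<open>\<gamma> \<parallel>E'\<parallel>\<^sup>2\<close>, and since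
  \<open>\<gamma> = \<Delta>t\<^sup>2 (1 - \<epsilon>)\<^sup>2/\<epsilon>\<^sup>2\<close> this yields \<open>\<parallel>u\<^sub>h\<^sup>n\<^sup>+\<^sup>1 - u(t\<^sup>n\<^sup>+\<^sup>1)\<parallel> = O(\<Delta>t\<^sup>2)\<close>, which is
  at most the claimed bound.\<close>

lemma smooth2_px: "smooth2 f \<Longrightarrow> smooth2 (px f)"
  unfolding smooth2_def by (metis Ck.simps(2))

lemma smooth2_differentiable: "smooth2 f \<Longrightarrow> (\<lambda>q. f (fst q) (snd q)) differentiable (at p)"
  unfolding smooth2_def by (metis Ck.simps(2))

lemma smooth2_has_px:
  assumes "smooth2 f"
  shows "((\<lambda>y. f y t) has_real_derivative px f x t) (at x)"
proof -
  have "((\<lambda>q. f (fst q) (snd q)) \<circ> (\<lambda>y. (y, t))) differentiable (at x)"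
    by (intro differentiable_chain_at smooth2_differentiable[OF assms]) simp
  then have "(\<lambda>y. f y t) differentiable (at x)" by (simp add: o_def)
  then show ?thesis unfolding px_def using DERIV_deriv_iff_real_differentiable by blast
qed

lemma smooth2_has_pt:
  assumes "smooth2 f"
  shows "((\<lambda>s. f x s) has_real_derivative pt f x t) (at t)"
proof -
  have "((\<lambda>q. f (fst q) (snd q)) \<circ> (\<lambda>s. (x, s))) differentiable (at t)"
    by (intro differentiable_chain_at smooth2_differentiable[OF assms]) simp
  then have "(\<lambda>s. f x s) differentiable (at t)" by (simp add: o_def)
  then show ?thesis unfolding pt_def using DERIV_deriv_iff_real_differentiable by blast
qed

lemma smooth2_continuous_on_x:
  assumes "smooth2 f"
  shows "continuous_on UNIV (\<lambda>y. f y t)"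
proof -
  have "\<And>x. isCont (\<lambda>y. f y t) x" using smooth2_has_px[OF assms] DERIV_isCont by blast
  then show ?thesis by (simp add: continuous_at_imp_continuous_on)
qed

lemma bounded_derivs_uniform:
  assumes "\<forall>f\<in>set fs. bounded_derivs f"
  shows "\<exists>M\<ge>0. \<forall>f\<in>set fs. \<forall>ds\<in>set dss. \<forall>x t. 0 \<le> t \<longrightarrow> \<bar>pd ds f x t\<bar> \<le> M"
proof -
  have "\<forall>p\<in>set fs \<times> set dss. \<exists>B. \<forall>x t. 0 \<le> t \<longrightarrow> \<bar>pd (snd p) (fst p) x t\<bar> \<le> B"
    using assms unfolding bounded_derivs_def by auto
  from finite_set_choice[OF _ this] obtain B
    where B: "\<forall>p\<in>set fs \<times> set dss. \<forall>x t. 0 \<le> t \<longrightarrow> \<bar>pd (snd p) (fst p) x t\<bar> \<le> B p"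
    by auto
  define M where "M = (\<Sum>p\<in>set fs \<times> set dss. \<bar>B p\<bar>)"
  have B_le: "B p \<le> M" if "p \<in> set fs \<times> set dss" for p
    using member_le_sum[of p "set fs \<times> set dss" "\<lambda>p. \<bar>B p\<bar>"] that unfolding M_def by auto
  show ?thesis
  proof (intro exI[of _ M] conjI ballI allI impI)
    show "0 \<le> M" unfolding M_def by (simp add: sum_nonneg)
    fix f ds and x t :: real assume "f \<in> set fs" "ds \<in> set dss" "0 \<le> t"
    then have p: "(f, ds) \<in> set fs \<times> set dss" by simp
    show "\<bar>pd ds f x t\<bar> \<le> M"
      using B[rule_format, OF p \<open>0 \<le> t\<close>, of x] B_le[OF p] by simp
  qed
qed

lemma mvt_between:
  fixes f f' :: "real \<Rightarrow> real"
  assumes "\<And>y. DERIV f y :> f' y"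
  shows "\<exists>z. min a b \<le> z \<and> z \<le> max a b \<and> f b - f a = (b - a) * f' z"
proof (cases a b rule: linorder_cases)
  case less
  from MVT2[OF less assms] obtain z where "a < z" "z < b" "f b - f a = (b - a) * f' z"
    by blast
  then show ?thesis using less by (intro exI[of _ z]) auto
next
  case greater
  from MVT2[OF greater assms] obtain z where "b < z" "z < a" "f a - f b = (a - b) * f' z"
    by blast
  then show ?thesis using greater by (intro exI[of _ z]) (auto simp: algebra_simps)
qed auto

lemma abs_diff_le_by_deriv_bound:
  fixes f f' :: "real \<Rightarrow> real"
  assumes "\<And>y. DERIV f y :> f' y" "\<And>y. min a b \<le> y \<Longrightarrow> y \<le> max a b \<Longrightarrow> \<bar>f' y\<bar> \<le> M"
  shows "\<bar>f b - f a\<bar> \<le> M * \<bar>b - a\<bar>"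
proof -
  obtain z where z: "min a b \<le> z" "z \<le> max a b" "f b - f a = (b - a) * f' z"
    using mvt_between[OF assms(1)] by blast
  have "\<bar>f b - f a\<bar> = \<bar>b - a\<bar> * \<bar>f' z\<bar>" using z(3) by (simp only: abs_mult)
  also have "\<dots> \<le> \<bar>b - a\<bar> * M" using assms(2)[OF z(1,2)] by (simp add: mult_left_mono)
  finally show ?thesis by (simp add: mult.commute)
qed

lemma second_difference_bound:
  fixes f f' :: "real \<Rightarrow> real"
  assumes d: "\<And>y. DERIV f y :> f' y" and k: "0 \<le> k"
    and D: "\<And>y z. \<bar>y - a\<bar> \<le> k \<Longrightarrow> \<bar>z - a\<bar> \<le> k \<Longrightarrow> \<bar>f' y - f' z\<bar> \<le> D"
  shows "\<bar>f (a + k) + f (a - k) - 2 * f a\<bar> \<le> k * D"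
proof -
  obtain z1 where z1: "min a (a + k) \<le> z1" "z1 \<le> max a (a + k)" "f (a + k) - f a = k * f' z1"
    using mvt_between[OF d, of a "a + k"] by auto
  obtain z2 where z2: "min (a - k) a \<le> z2" "z2 \<le> max (a - k) a" "f a - f (a - k) = k * f' z2"
    using mvt_between[OF d, of "a - k" a] by auto
  have "f (a + k) + f (a - k) - 2 * f a = k * (f' z1 - f' z2)"
    using z1(3) z2(3) by (simp add: algebra_simps)
  moreover have "\<bar>f' z1 - f' z2\<bar> \<le> D" using z1 z2 k by (intro D) auto
  ultimately show ?thesis using k by (simp add: abs_mult mult_left_mono)
qed

lemma smooth2_lipschitz:
  assumes "smooth2 f" "\<And>x t. 0 \<le> t \<Longrightarrow> \<bar>px f x t\<bar> \<le> M" "\<And>x t. 0 \<le> t \<Longrightarrow> \<bar>pt f x t\<bar> \<le> M"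
    "0 \<le> t" "0 \<le> s"
  shows "\<bar>f x t - f y s\<bar> \<le> M * (\<bar>x - y\<bar> + \<bar>t - s\<bar>)"
proof -
  have "\<bar>f x t - f y t\<bar> \<le> M * \<bar>x - y\<bar>"
    using abs_diff_le_by_deriv_bound[of "\<lambda>z. f z t" "\<lambda>z. px f z t" y x M]
      smooth2_has_px[OF assms(1)] assms(2)[OF assms(4)] by blast
  moreover have "\<bar>f y t - f y s\<bar> \<le> M * \<bar>t - s\<bar>"
    by (rule abs_diff_le_by_deriv_bound[of "\<lambda>z. f y z" "\<lambda>z. pt f y z" s t M])
      (use smooth2_has_pt[OF assms(1)] assms(3-5) in auto)
  ultimately show ?thesis by (simp add: distrib_left)
qed

subsection \<open>Consequences of an expansion \<open>w = \<epsilon>\<^sup>2 w\<^sub>2 + O(\<epsilon>\<^sup>3)\<close>\<close>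

lemma abs_le_of_expansion:
  fixes a b e K M :: real
  assumes "\<bar>a - e\<^sup>2 * b\<bar> \<le> K * e ^ 3" "\<bar>b\<bar> \<le> M" "0 \<le> K" "0 \<le> e" "e \<le> 1"
  shows "\<bar>a\<bar> \<le> e\<^sup>2 * (M + K)"
proof -
  have "\<bar>e\<^sup>2 * b\<bar> \<le> e\<^sup>2 * M" using assms(2) by (simp add: abs_mult mult_left_mono)
  moreover have "K * e ^ 3 \<le> K * e\<^sup>2"
    using assms(3-5) by (intro mult_left_mono) (auto simp: power_decreasing)
  ultimately show ?thesis using assms(1) by (simp add: algebra_simps)
qed

lemma px_diff_of_expansion:
  assumes "smooth2 w\<^sub>2"
    and "\<And>x s. 0 \<le> s \<Longrightarrow> \<bar>px (px w\<^sub>2) x s\<bar> \<le> M" "\<And>x s. 0 \<le> s \<Longrightarrow> \<bar>pt (px w\<^sub>2) x s\<bar> \<le> M"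
    and "\<And>x s. 0 \<le> s \<Longrightarrow> \<bar>px w x s - e\<^sup>2 * px w\<^sub>2 x s\<bar> \<le> K * e ^ 3"
    and "0 \<le> s" "0 \<le> s'"
  shows "\<bar>px w x s - px w y s'\<bar> \<le> e\<^sup>2 * (2 * K * e + M * (\<bar>x - y\<bar> + \<bar>s - s'\<bar>))"
proof -
  have "\<bar>px w\<^sub>2 x s - px w\<^sub>2 y s'\<bar> \<le> M * (\<bar>x - y\<bar> + \<bar>s - s'\<bar>)"
    by (rule smooth2_lipschitz[OF smooth2_px[OF assms(1)]]) (use assms in auto)
  then have "\<bar>e\<^sup>2 * px w\<^sub>2 x s - e\<^sup>2 * px w\<^sub>2 y s'\<bar> \<le> e\<^sup>2 * (M * (\<bar>x - y\<bar> + \<bar>s - s'\<bar>))"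
    by (simp add: abs_mult mult_left_mono flip: right_diff_distrib)
  then have "\<bar>px w x s - px w y s'\<bar> \<le> 2 * (K * e ^ 3) + e\<^sup>2 * (M * (\<bar>x - y\<bar> + \<bar>s - s'\<bar>))"
    using assms(4)[OF assms(5), of x] assms(4)[OF assms(6), of y] by (simp add: abs_le_iff)
  also have "\<dots> = e\<^sup>2 * (2 * K * e + M * (\<bar>x - y\<bar> + \<bar>s - s'\<bar>))"
    by (simp add: power2_eq_square power3_eq_cube algebra_simps)
  finally show ?thesis .
qed

lemma second_difference_of_expansion:
  assumes "smooth2 w" "smooth2 w\<^sub>2"
    and "\<And>x s. 0 \<le> s \<Longrightarrow> \<bar>px (px w\<^sub>2) x s\<bar> \<le> M" "\<And>x s. 0 \<le> s \<Longrightarrow> \<bar>pt (px w\<^sub>2) x s\<bar> \<le> M"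
    and "\<And>x s. 0 \<le> s \<Longrightarrow> \<bar>px w x s - e\<^sup>2 * px w\<^sub>2 x s\<bar> \<le> K * e ^ 3"
    and "0 \<le> s" "0 \<le> K" "0 \<le> M" "0 \<le> e" "e \<le> 1" "0 \<le> h" "h \<le> 1"
  shows "\<bar>w (m + h) s + w (m - h) s - 2 * w m s\<bar> \<le> 2 * h * (e\<^sup>2 * (K + M))"
proof -
  have "\<bar>w (m + h) s + w (m - h) s - 2 * w m s\<bar> \<le> h * (e\<^sup>2 * (2 * K + 2 * M))"
  proof (rule second_difference_bound[OF smooth2_has_px[OF assms(1)] \<open>0 \<le> h\<close>])
    fix y z assume "\<bar>y - m\<bar> \<le> h" "\<bar>z - m\<bar> \<le> h"
    then have "M * (\<bar>y - z\<bar> + \<bar>s - s\<bar>) \<le> M * 2"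
      using assms(8,12) by (intro mult_left_mono) auto
    moreover have "2 * K * e \<le> 2 * K" using assms(7,10) by (simp add: mult_left_le)
    ultimately have "2 * K * e + M * (\<bar>y - z\<bar> + \<bar>s - s\<bar>) \<le> 2 * K + 2 * M" by linarith
    then have "e\<^sup>2 * (2 * K * e + M * (\<bar>y - z\<bar> + \<bar>s - s\<bar>)) \<le> e\<^sup>2 * (2 * K + 2 * M)"
      by (simp add: mult_left_mono)
    then show "\<bar>px w y s - px w z s\<bar> \<le> e\<^sup>2 * (2 * K + 2 * M)"
      using px_diff_of_expansion[OF assms(2-5) assms(6) assms(6), of y z] by linarith
  qed
  then show ?thesis by (simp add: algebra_simps)
qed

abbreviation mesh_node :: "nat \<Rightarrow> nat \<Rightarrow> real" where
  "mesh_node N \<equiv> node (1 / real N)"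

lemma node_Suc: "node h (Suc i) = node h i + h"
  by (simp add: node_def algebra_simps)

lemma cell_eq:
  assumes "0 < h" "1 \<le> i" "node h i < x" "x < node h (Suc i)"
  shows "cell h x = i"
proof -
  have a: "real i - 1 < x / h" using assms by (simp add: node_def field_simps)
  have b: "x / h < real i" using assms by (simp add: node_def field_simps)
  have "\<lfloor>x / h\<rfloor> = int i - 1"
    using a b by (subst floor_eq_iff) (simp add: of_nat_diff)
  then show ?thesis using assms(2) unfolding cell_def by simp
qed

lemma node_1: "node h (Suc 0) = 0" by (simp add: node_def)

definition mesh_points :: "nat \<Rightarrow> real set" where
  "mesh_points N = (\<lambda>k. real k / real N) ` {..N}"

lemma finite_mesh_points: "finite (mesh_points N)" by (simp add: mesh_points_def)

definition open_cell :: "nat \<Rightarrow> nat \<Rightarrow> real set" where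
  "open_cell N i = {mesh_node N i <..< mesh_node N (Suc i)}"

lemma mem_open_cell:
  assumes "1 \<le> N" "x \<in> {0..1} - mesh_points N"
  shows "\<exists>i\<in>{1..N}. x \<in> open_cell N i"
proof -
  have x: "0 \<le> x" "x \<le> 1" "x \<notin> mesh_points N" using assms(2) by auto
  define k where "k = nat \<lfloor>x * N\<rfloor>"
  have xN: "0 \<le> x * N" using x by simp
  have k1: "real k \<le> x * N" using xN unfolding k_def by linarith
  have k2: "x * N < real k + 1" using xN unfolding k_def by linarith
  have kn: "real k \<noteq> x * N"
  proof
    assume "real k = x * N"
    then have "x = real k / real N" using assms(1) by (simp add: field_simps)
    moreover have "k \<le> N"
    proof -
      have "x * N \<le> N" using x by (simp add: mult_left_le_one_le)
      then show ?thesis using \<open>real k = x * N\<close> by linarith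
    qed
    ultimately show False using x(3) unfolding mesh_points_def by auto
  qed
  have k3: "real k < x * N" using k1 kn by simp
  have kN: "k < N"
  proof (rule ccontr)
    assume "\<not> k < N" then have "real N \<le> real k" by simp
    then have "real N < x * N" using k3 by simp
    then have "1 < x" using assms(1) by (simp add: mult_less_cancel_right2)
    then show False using x(2) by simp
  qed
  show ?thesis
  proof (rule bexI[of _ "Suc k"])
    show "Suc k \<in> {1..N}" using kN by simp
    show "x \<in> open_cell N (Suc k)"
      using k3 k2 assms(1) by (simp add: open_cell_def node_def field_simps)
  qed
qed

text \<open>Cellwise continuity ignores the nodes, where \<open>deriv\<close> of a function in \<open>V\<^sub>h\<close> takes
  arbitrary values.\<close>

definition cellwise_continuous :: "nat \<Rightarrow> (real \<Rightarrow> real) \<Rightarrow> bool" where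
  "cellwise_continuous N f \<longleftrightarrow> (\<forall>i\<in>{1..N}. \<exists>g. continuous_on {mesh_node N i..mesh_node N (Suc i)} g
        \<and> (\<forall>x\<in>open_cell N i. f x = g x))"

lemma cellwise_continuous_add:
  "cellwise_continuous N f \<Longrightarrow> cellwise_continuous N g \<Longrightarrow> cellwise_continuous N (\<lambda>x. f x + g x)"
  unfolding cellwise_continuous_def
  by (metis (no_types, lifting) continuous_on_add)

lemma cellwise_continuous_diff:
  "cellwise_continuous N f \<Longrightarrow> cellwise_continuous N g \<Longrightarrow> cellwise_continuous N (\<lambda>x. f x - g x)"
  unfolding cellwise_continuous_def
  by (metis (no_types, lifting) continuous_on_diff)

lemma cellwise_continuous_mult:
  "cellwise_continuous N f \<Longrightarrow> cellwise_continuous N g \<Longrightarrow> cellwise_continuous N (\<lambda>x. f x * g x)"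
  unfolding cellwise_continuous_def
  by (metis (no_types, lifting) continuous_on_mult)

lemma cellwise_continuous_const: "cellwise_continuous N (\<lambda>x. c)"
  unfolding cellwise_continuous_def by (auto intro!: exI[of _ "\<lambda>x. c"])

lemma cellwise_continuous_if_continuous: "continuous_on UNIV f \<Longrightarrow> cellwise_continuous N f"
  unfolding cellwise_continuous_def by (metis continuous_on_subset subset_UNIV)

lemma cellwise_continuous_cell_fun: "cellwise_continuous N (\<lambda>x. c (cell (1 / real N) x))"
  unfolding cellwise_continuous_def
proof
  fix i assume i: "i \<in> {1..N}"
  show "\<exists>g. continuous_on {mesh_node N i..mesh_node N (Suc i)} g \<and>
            (\<forall>x\<in>open_cell N i. c (cell (1 / real N) x) = g x)"
  proof (rule exI[of _ "\<lambda>x. c i"], intro conjI ballI)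
    fix x assume "x \<in> open_cell N i"
    then show "c (cell (1 / real N) x) = c i"
      using i by (subst cell_eq) (auto simp: open_cell_def)
  qed simp
qed

lemma cellwise_continuous_divide: "cellwise_continuous N f \<Longrightarrow> cellwise_continuous N (\<lambda>x. f x / c)"
proof -
  assume "cellwise_continuous N f"
  then have "cellwise_continuous N (\<lambda>x. f x * (1 / c))"
    by (intro cellwise_continuous_mult cellwise_continuous_const)
  then show ?thesis by simp
qed

lemma cellwise_continuous_power2: "cellwise_continuous N f \<Longrightarrow> cellwise_continuous N (\<lambda>x. (f x)\<^sup>2)"
  unfolding power2_eq_square by (rule cellwise_continuous_mult)

lemma cellwise_continuous_integrable:
  assumes "1 \<le> N" "cellwise_continuous N f"
  shows "f integrable_on {0..1}"
proof -
  have "k \<le> N \<Longrightarrow> f integrable_on {0..real k / real N}" for k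
  proof (induction k)
    case 0
    then show ?case using integrable_on_refl[of f 0] by simp
  next
    case (Suc k)
    then have "Suc k \<in> {1..N}" by simp
    then obtain g where g: "continuous_on {mesh_node N (Suc k)..mesh_node N (Suc (Suc k))} g"
        "\<forall>x\<in>open_cell N (Suc k). f x = g x"
      using assms(2) unfolding cellwise_continuous_def by blast
    have e1: "mesh_node N (Suc k) = real k / real N" by (simp add: node_def)
    have e2: "mesh_node N (Suc (Suc k)) = real (Suc k) / real N" by (simp add: node_def)
    have gi: "g integrable_on cbox (real k / real N) (real (Suc k) / real N)"
      using integrable_continuous_interval[OF g(1)] by (simp add: e1 e2)
    have fi: "f integrable_on cbox (real k / real N) (real (Suc k) / real N)"
      by (rule integrable_spike_interior[OF _ gi]) (use g(2) in \<open>auto simp: open_cell_def e1 e2\<close>)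
    show ?case
      by (rule Henstock_Kurzweil_Integration.integrable_combine[of 0 "real k / real N"])
        (use Suc fi in \<open>auto simp: divide_right_mono cbox_interval\<close>)
  qed
  from this[of N] show ?thesis using assms(1) by simp
qed

lemma integral_le_cellwise:
  assumes N: "1 \<le> N" and fi: "f integrable_on {0..1}" and gi: "g integrable_on {0..1}"
    and le: "\<And>i x. i \<in> {1..N} \<Longrightarrow> x \<in> open_cell N i \<Longrightarrow> f x \<le> (g x :: real)"
  shows "integral {0..1} f \<le> integral {0..1} g"
proof -
  define f' where "f' = (\<lambda>x. if x \<in> mesh_points N then g x else f x)"
  have "integral {0..1} f = integral {0..1} f'"
    by (rule integral_spike[OF negligible_finite[OF finite_mesh_points[of N]]]) (simp add: f'_def)
  moreover have "f' integrable_on {0..1}"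
    by (rule integrable_spike_finite[OF finite_mesh_points[of N] _ fi]) (simp add: f'_def)
  moreover have "\<And>x. x \<in> {0..1} \<Longrightarrow> f' x \<le> g x"
  proof -
    fix x :: real assume x: "x \<in> {0..1}"
    show "f' x \<le> g x"
    proof (cases "x \<in> mesh_points N")
      case False
      then obtain i where "i \<in> {1..N}" "x \<in> open_cell N i" using mem_open_cell[OF N] x by blast
      then show ?thesis using le False by (simp add: f'_def)
    qed (simp add: f'_def)
  qed
  ultimately show ?thesis using integral_le[of f' "{0..1}" g] gi by simp
qed

lemma integral_eq_cellwise:
  assumes N: "1 \<le> N" and eq: "\<And>i x. i \<in> {1..N} \<Longrightarrow> x \<in> open_cell N i \<Longrightarrow> f x = (g x :: real)"
  shows "integral {0..1} f = integral {0..1} g"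
proof (rule integral_spike[OF negligible_finite[OF finite_mesh_points[of N]]])
  fix x assume x: "x \<in> {0..1} - mesh_points N"
  then obtain i where "i \<in> {1..N}" "x \<in> open_cell N i" using mem_open_cell[OF N] by blast
  then show "g x = f x" using eq by simp
qed

lemma Vh_affine:
  assumes "\<phi> \<in> Vh N" "i \<in> {1..N}"
  obtains a b where "\<And>x. x \<in> {mesh_node N i..mesh_node N (Suc i)} \<Longrightarrow> \<phi> x = a * x + b"
  using assms unfolding Vh_def by blast

lemma has_real_derivative_affine_on:
  assumes "\<And>y. y \<in> {p..q} \<Longrightarrow> f y = a * y + b" "p < x" "x < q"
  shows "(f has_real_derivative a) (at x)"
proof -
  have "((\<lambda>y. a * y + b) has_real_derivative a) (at x)"
    by (auto intro!: derivative_eq_intros)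
  then show ?thesis
    by (rule has_field_derivative_transform_within_open[of _ _ _ "{p<..<q}"]) (use assms in auto)
qed

lemma Vh_has_derivative:
  assumes "\<phi> \<in> Vh N" "i \<in> {1..N}" "x \<in> open_cell N i"
  shows "(\<phi> has_real_derivative deriv \<phi> x) (at x)"
proof -
  obtain a b where ab: "\<And>x. x \<in> {mesh_node N i..mesh_node N (Suc i)} \<Longrightarrow> \<phi> x = a * x + b"
    using Vh_affine[OF assms(1,2)] by blast
  have "(\<phi> has_real_derivative a) (at x)"
    by (rule has_real_derivative_affine_on[OF ab]) (use assms(3) in \<open>auto simp: open_cell_def\<close>)
  then show ?thesis using DERIV_imp_deriv by metis
qed

lemma cellwise_continuous_Vh: assumes "\<phi> \<in> Vh N" shows "cellwise_continuous N \<phi>"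
  unfolding cellwise_continuous_def
proof
  fix i assume i: "i \<in> {1..N}"
  obtain a b where ab: "\<And>x. x \<in> {mesh_node N i..mesh_node N (Suc i)} \<Longrightarrow> \<phi> x = a * x + b"
    using Vh_affine[OF assms i] by blast
  show "\<exists>g. continuous_on {mesh_node N i..mesh_node N (Suc i)} g \<and> (\<forall>x\<in>open_cell N i. \<phi> x = g x)"
    by (rule exI[of _ "\<lambda>x. a * x + b"]) (auto simp: open_cell_def ab intro!: continuous_intros)
qed

lemma cellwise_continuous_deriv_Vh: assumes "\<phi> \<in> Vh N" shows "cellwise_continuous N (deriv \<phi>)"
  unfolding cellwise_continuous_def
proof
  fix i assume i: "i \<in> {1..N}"
  obtain a b where ab: "\<And>x. x \<in> {mesh_node N i..mesh_node N (Suc i)} \<Longrightarrow> \<phi> x = a * x + b"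
    using Vh_affine[OF assms i] by blast
  have "\<forall>x\<in>open_cell N i. deriv \<phi> x = a"
  proof
    fix x assume "x \<in> open_cell N i"
    then have "(\<phi> has_real_derivative a) (at x)"
      by (intro has_real_derivative_affine_on[OF ab]) (auto simp: open_cell_def)
    then show "deriv \<phi> x = a" by (rule DERIV_imp_deriv)
  qed
  then show "\<exists>g. continuous_on {mesh_node N i..mesh_node N (Suc i)} g \<and>
      (\<forall>x\<in>open_cell N i. deriv \<phi> x = g x)"
    by (intro exI[of _ "\<lambda>x. a"]) auto
qed

lemma Vh_deriv_has_integral_0:
  assumes "1 \<le> N" "\<phi> \<in> Vh N"
  shows "(deriv \<phi> has_integral 0) {0..1}"
proof -
  have "(deriv \<phi> has_integral (\<phi> 1 - \<phi> 0)) {0..1}"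
  proof (rule fundamental_theorem_of_calculus_strong[OF finite_mesh_points[of N]])
    show "continuous_on {0..1} \<phi>" using assms(2) unfolding Vh_def by blast
    fix x assume "x \<in> {0..1} - mesh_points N"
    then obtain i where "i \<in> {1..N}" "x \<in> open_cell N i" using mem_open_cell[OF assms(1)] by blast
    then show "(\<phi> has_vector_derivative deriv \<phi> x) (at x)"
      using Vh_has_derivative[OF assms(2)] has_real_derivative_iff_has_vector_derivative by blast
  qed simp
  then show ?thesis using assms(2) unfolding Vh_def by simp
qed

lemma Vh_diff: assumes "\<phi> \<in> Vh N" "\<psi> \<in> Vh N" shows "(\<lambda>x. \<phi> x - \<psi> x) \<in> Vh N"
proof -
  have "\<forall>i\<in>{1..N}. \<exists>a b. \<forall>x\<in>{mesh_node N i..mesh_node N (Suc i)}. \<phi> x - \<psi> x = a * x + b"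
  proof
    fix i assume i: "i \<in> {1..N}"
    obtain a b where ab: "\<And>x. x \<in> {mesh_node N i..mesh_node N (Suc i)} \<Longrightarrow> \<phi> x = a * x + b"
      using Vh_affine[OF assms(1) i] by blast
    obtain c d where cd: "\<And>x. x \<in> {mesh_node N i..mesh_node N (Suc i)} \<Longrightarrow> \<psi> x = c * x + d"
      using Vh_affine[OF assms(2) i] by blast
    show "\<exists>a b. \<forall>x\<in>{mesh_node N i..mesh_node N (Suc i)}. \<phi> x - \<psi> x = a * x + b"
      by (rule exI[of _ "a - c"], rule exI[of _ "b - d"]) (auto simp: ab cd algebra_simps)
  qed
  then show ?thesis using assms unfolding Vh_def by (auto intro!: continuous_intros)
qed

lemma deriv_diff_Vh:
  assumes "\<phi> \<in> Vh N" "\<psi> \<in> Vh N" "i \<in> {1..N}" "x \<in> open_cell N i"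
  shows "deriv (\<lambda>y. \<phi> y - \<psi> y) x = deriv \<phi> x - deriv \<psi> x"
  by (intro DERIV_imp_deriv DERIV_diff Vh_has_derivative[OF assms(1,3,4)]
      Vh_has_derivative[OF assms(2-4)])

definition nodal_interp :: "nat \<Rightarrow> (real \<Rightarrow> real) \<Rightarrow> real \<Rightarrow> real" where
  "nodal_interp N V y = (\<Sum>j\<in>{1..N}. (V (mesh_node N (Suc j)) - V (mesh_node N j))
                      * min 1 (max 0 ((y - mesh_node N j) * real N)))"

lemma nodal_interp_on_cell:
  assumes N: "1 \<le> N" and i: "i \<in> {1..N}" and y: "mesh_node N i \<le> y" "y \<le> mesh_node N (Suc i)"
    and V0: "V 0 = 0"
  shows "nodal_interp N V y = V (mesh_node N i)
           + (y - mesh_node N i) * real N * (V (mesh_node N (Suc i)) - V (mesh_node N i))"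
proof -
  let ?n = "mesh_node N"
  let ?d = "\<lambda>j. V (?n (Suc j)) - V (?n j)"
  let ?r = "\<lambda>j. min 1 (max 0 ((y - ?n j) * real N))"
  have Npos: "0 < real N" using N by simp
  have nd: "\<And>j. ?n j = (real j - 1) / real N" by (simp add: node_def)
  have r1: "?r j = 1" if "j < i" for j
  proof -
    have "real j + 1 \<le> real i" using that by simp
    then have "1 \<le> (y - ?n j) * real N" using y(1) Npos by (simp add: nd field_simps)
    then show ?thesis by simp
  qed
  have r0: "?r j = 0" if "i < j" for j
  proof -
    have "real i + 1 \<le> real j" using that by simp
    moreover have "y * real N \<le> real i" using y(2) Npos by (simp add: nd field_simps)
    moreover have "(y - ?n j) * real N = y * real N - (real j - 1)"
      using Npos by (simp add: nd field_simps)
    ultimately have "(y - ?n j) * real N \<le> 0" by linarith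
    then show ?thesis by simp
  qed
  have ri: "?r i = (y - ?n i) * real N"
  proof -
    have "0 \<le> (y - ?n i) * real N" using y(1) Npos by simp
    moreover have "(y - ?n i) * real N \<le> 1" using y(2) Npos by (simp add: nd field_simps)
    ultimately show ?thesis by simp
  qed
  have split: "{1..N} = {1..<i} \<union> insert i {i<..N}" using i by auto
  have "nodal_interp N V y = (\<Sum>j\<in>{1..<i}. ?d j * ?r j) + ?d i * ?r i + (\<Sum>j\<in>{i<..N}. ?d j * ?r j)"
    unfolding nodal_interp_def split
    by (subst sum.union_disjoint) (auto simp: sum.insert)
  also have "(\<Sum>j\<in>{1..<i}. ?d j * ?r j) = (\<Sum>j\<in>{1..<i}. ?d j)" by (rule sum.cong) (auto simp: r1)
  also have "\<dots> = V (?n i) - V (?n 1)" using i by (subst sum_Suc_diff') auto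
  also have "(\<Sum>j\<in>{i<..N}. ?d j * ?r j) = 0" by (rule sum.neutral) (auto simp: r0)
  finally have "nodal_interp N V y = V (?n i) - V (?n 1) + ?d i * ?r i + 0" .
  then show ?thesis unfolding ri using V0 by (simp add: node_1 algebra_simps)
qed

lemma nodal_interp_in_Vh:
  assumes N: "1 \<le> N" and V0: "V 0 = 0" and V1: "V 1 = 0"
  shows "nodal_interp N V \<in> Vh N"
proof -
  have c: "continuous_on {0..1} (nodal_interp N V)"
    unfolding nodal_interp_def by (intro continuous_intros)
  have z0: "nodal_interp N V 0 = 0"
    using nodal_interp_on_cell[OF N, of 1 0 V] N V0 by (simp add: node_1 node_def)
  have nN: "mesh_node N (Suc N) = 1" "mesh_node N N \<le> 1"
    using N by (auto simp: node_def field_simps)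
  have z1: "nodal_interp N V 1 = 0"
    using nodal_interp_on_cell[OF N, of N 1 V] N V0 V1 nN by (simp add: node_def field_simps)
  have aff: "\<forall>i\<in>{1..N}. \<exists>a b. \<forall>x\<in>{mesh_node N i..mesh_node N (Suc i)}.
      nodal_interp N V x = a * x + b"
  proof
    fix i assume i: "i \<in> {1..N}"
    let ?n = "mesh_node N"
    show "\<exists>a b. \<forall>x\<in>{?n i..?n (Suc i)}. nodal_interp N V x = a * x + b"
      by (rule exI[of _ "real N * (V (?n (Suc i)) - V (?n i))"],
          rule exI[of _ "V (?n i) - ?n i * real N * (V (?n (Suc i)) - V (?n i))"])
         (use nodal_interp_on_cell[OF N i, where V=V] V0 in \<open>auto simp: algebra_simps\<close>)
  qed
  show ?thesis unfolding Vh_def using c z0 z1 aff by blast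
qed

lemma deriv_nodal_interp:
  assumes N: "1 \<le> N" and i: "i \<in> {1..N}" and x: "x \<in> open_cell N i" and V0: "V 0 = 0"
  shows "deriv (nodal_interp N V) x = real N * (V (mesh_node N (Suc i)) - V (mesh_node N i))"
proof -
  let ?n = "mesh_node N"
  have "(nodal_interp N V has_real_derivative real N * (V (?n (Suc i)) - V (?n i))) (at x)"
    by (rule has_real_derivative_affine_on
        [where b = "V (?n i) - ?n i * real N * (V (?n (Suc i)) - V (?n i))"])
      (use x nodal_interp_on_cell[OF N i, where V=V] V0 in
        \<open>auto simp: algebra_simps open_cell_def\<close>)
  then show ?thesis by (rule DERIV_imp_deriv)
qed

lemma mult_minus_square_le: "(a::real) * x - x\<^sup>2 \<le> a\<^sup>2 / 4"
proof -
  have "0 \<le> (x - a / 2)\<^sup>2" by simp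
  then show ?thesis by (simp add: power2_eq_square algebra_simps)
qed

lemma minus_mult_minus_half_square_le:
  assumes "(g::real) > 0"
  shows "- b * y - g / 2 * y\<^sup>2 \<le> b\<^sup>2 / (2 * g)"
proof -
  have "0 \<le> (g * y + b)\<^sup>2" by simp
  then have "2 * g * (- b * y - g / 2 * y\<^sup>2) \<le> b\<^sup>2" by (simp add: power2_eq_square algebra_simps)
  then show ?thesis using assms by (simp add: field_simps)
qed

subsection \<open>One time step from exact data\<close>

text \<open>\<open>t = t\<^sup>n\<close>, \<open>h = \<Delta>x\<close>, \<open>e = \<epsilon>\<close>; \<open>M\<close> bounds the derivatives of the limit profiles
  \<open>v2\<close>, \<open>u2\<close> and of \<open>g\<close>, and \<open>K\<close> is the constant of (A1).\<close>

locale scheme_step =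
  fixes e h dt t K M CFL e0 :: real and N :: nat and v u g v2 u2 :: "real \<Rightarrow> real \<Rightarrow> real"
  assumes e: "0 < e" "e \<le> e0" "e0 < 1"
    and CFL: "0 < CFL" "CFL < 1"
    and N: "1 \<le> N" and h: "h = 1 / real N" and dt: "dt = CFL * h" and e_le_dt: "e \<le> dt"
    and t: "0 \<le> t"
    and smooth: "smooth2 v" "smooth2 u" "smooth2 g" "smooth2 v2" "smooth2 u2"
    and pde: "\<And>x s. 0 < x \<Longrightarrow> x < 1 \<Longrightarrow> 0 < s \<Longrightarrow> pt v x s = px u x s"
      "\<And>x s. 0 < x \<Longrightarrow> x < 1 \<Longrightarrow> 0 < s \<Longrightarrow> pt u x s = px v x s / e\<^sup>2 + g x s"
    and bc: "\<And>s. 0 \<le> s \<Longrightarrow> v 0 s = 0" "\<And>s. 0 \<le> s \<Longrightarrow> v 1 s = 0"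
    and K: "0 \<le> K" and M: "0 \<le> M"
    and v2_bounds: "\<And>x s. 0 \<le> s \<Longrightarrow> \<bar>px v2 x s\<bar> \<le> M"
      "\<And>x s. 0 \<le> s \<Longrightarrow> \<bar>px (px v2) x s\<bar> \<le> M" "\<And>x s. 0 \<le> s \<Longrightarrow> \<bar>pt (px v2) x s\<bar> \<le> M"
    and u2_bounds: "\<And>x s. 0 \<le> s \<Longrightarrow> \<bar>px u2 x s\<bar> \<le> M"
      "\<And>x s. 0 \<le> s \<Longrightarrow> \<bar>px (px u2) x s\<bar> \<le> M" "\<And>x s. 0 \<le> s \<Longrightarrow> \<bar>pt (px u2) x s\<bar> \<le> M"
    and g_bounds: "\<And>x s. 0 \<le> s \<Longrightarrow> \<bar>px g x s\<bar> \<le> M" "\<And>x s. 0 \<le> s \<Longrightarrow> \<bar>pt g x s\<bar> \<le> M"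
    and v_expansion: "\<And>x s. 0 \<le> s \<Longrightarrow> \<bar>px v x s - e\<^sup>2 * px v2 x s\<bar> \<le> K * e ^ 3"
    and u_expansion: "\<And>x s. 0 \<le> s \<Longrightarrow> \<bar>px u x s - e\<^sup>2 * px u2 x s\<bar> \<le> K * e ^ 3"
begin

lemma h_pos: "0 < h" using N h by simp
lemma dt_pos: "0 < dt" using dt CFL h_pos by simp
lemma h_le_1: "h \<le> 1" using N h by simp
lemma dt_le_h: "dt \<le> h" using dt CFL h_pos by (simp add: mult_left_le_one_le)
lemma h_eq: "h = dt / CFL" using dt CFL by simp
lemma one_minus_e: "0 < 1 - e" "1 - e0 \<le> 1 - e" using e by auto

lemma e_cube_le: "e ^ 3 \<le> e\<^sup>2 * dt"
proof -
  have "e ^ 3 = e\<^sup>2 * e" by (simp add: power3_eq_cube power2_eq_square)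
  also have "\<dots> \<le> e\<^sup>2 * dt" using e_le_dt by (simp add: mult_left_mono)
  finally show ?thesis .
qed

lemma e_cube_le_square: "e ^ 3 \<le> e\<^sup>2"
  using e by (intro power_decreasing) auto

lemma e_times_le: "0 \<le> X \<Longrightarrow> e * (e\<^sup>2 * X) \<le> e\<^sup>2 * dt * X"
  using mult_right_mono[OF e_cube_le] by (simp add: power2_eq_square power3_eq_cube mult.assoc)

lemma abs_px_v_le: "0 \<le> s \<Longrightarrow> \<bar>px v x s\<bar> \<le> e\<^sup>2 * (M + K)"
  using abs_le_of_expansion[OF v_expansion v2_bounds(1)] K e by simp

lemma px_v_diff:
  "0 \<le> s \<Longrightarrow> 0 \<le> s' \<Longrightarrow>
    \<bar>px v x s - px v y s'\<bar> \<le> 2 * K * e ^ 3 + e\<^sup>2 * (M * (\<bar>x - y\<bar> + \<bar>s - s'\<bar>))"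
  using px_diff_of_expansion[OF smooth(4) v2_bounds(2,3) v_expansion, of s s' x y]
  by (simp add: power2_eq_square power3_eq_cube algebra_simps)

lemma px_u_diff:
  "0 \<le> s \<Longrightarrow> 0 \<le> s' \<Longrightarrow>
    \<bar>px u x s - px u y s'\<bar> \<le> 2 * K * e ^ 3 + e\<^sup>2 * (M * (\<bar>x - y\<bar> + \<bar>s - s'\<bar>))"
  using px_diff_of_expansion[OF smooth(5) u2_bounds(2,3) u_expansion, of s s' x y]
  by (simp add: power2_eq_square power3_eq_cube algebra_simps)

lemma second_difference_v:
  "0 \<le> s \<Longrightarrow> \<bar>v (m + h) s + v (m - h) s - 2 * v m s\<bar> \<le> 2 * h * (e\<^sup>2 * (K + M))"
  by (rule second_difference_of_expansion[OF smooth(1,4) v2_bounds(2,3) v_expansion])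
    (use K M e h_pos h_le_1 in auto)

lemma second_difference_u:
  "0 \<le> s \<Longrightarrow> \<bar>u (m + h) s + u (m - h) s - 2 * u m s\<bar> \<le> 2 * h * (e\<^sup>2 * (K + M))"
  by (rule second_difference_of_expansion[OF smooth(2,5) u2_bounds(2,3) u_expansion])
    (use K M e h_pos h_le_1 in auto)

lemma mid_Suc: "mid h (i + 1) = mid h i + h"
  by (simp add: mid_def algebra_simps)

lemma mid_pred: "1 \<le> i \<Longrightarrow> mid h (i - 1) = mid h i - h"
  by (simp add: mid_def of_nat_diff algebra_simps)

lemma open_cell_bounds:
  assumes i: "i \<in> {1..N}" and x: "x \<in> open_cell N i"
  shows "0 < x" "x < 1" "\<bar>x - mid h i\<bar> \<le> h / 2" "node h i < x" "x < node h i + h" "cell h x = i"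
proof -
  have x1: "node h i < x" "x < node h (Suc i)" using x h by (auto simp: open_cell_def)
  show "node h i < x" using x1 by simp
  show "x < node h i + h" using x1 node_Suc by simp
  have "0 \<le> node h i" using i h_pos by (simp add: node_def)
  then show "0 < x" using x1 by simp
  have "h * real i \<le> h * real N" using i h_pos by (intro mult_left_mono) auto
  then have "node h (Suc i) \<le> 1" using i h N by (simp add: node_def)
  then show "x < 1" using x1 by simp
  have "x - mid h i \<le> h / 2" "mid h i - x \<le> h / 2"
    using x1 by (simp_all add: node_def mid_def algebra_simps)
  then show "\<bar>x - mid h i\<bar> \<le> h / 2" by linarith
  show "cell h x = i" using cell_eq[OF h_pos _ x1] i by simp
qed

lemma abs_le_weaken_expansion_bound:
  assumes "\<bar>a\<bar> \<le> 2 * K * e ^ 3 + e\<^sup>2 * (M * d)" "d \<le> r"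
  shows "\<bar>a\<bar> \<le> e\<^sup>2 * (2 * K + M * r)"
proof -
  have "2 * K * e ^ 3 \<le> 2 * K * e\<^sup>2" using e_cube_le_square K by (simp add: mult_left_mono)
  moreover have "e\<^sup>2 * (M * d) \<le> e\<^sup>2 * (M * r)" using assms(2) M by (simp add: mult_left_mono)
  ultimately show ?thesis using assms(1) by (simp add: algebra_simps)
qed

lemma px_v_diff_le:
  "0 \<le> s \<Longrightarrow> 0 \<le> s' \<Longrightarrow> \<bar>x - y\<bar> + \<bar>s - s'\<bar> \<le> r \<Longrightarrow>
    \<bar>px v x s - px v y s'\<bar> \<le> e\<^sup>2 * (2 * K + M * r)"
  by (rule abs_le_weaken_expansion_bound[OF px_v_diff])

lemma px_u_diff_le:
  "0 \<le> s \<Longrightarrow> 0 \<le> s' \<Longrightarrow> \<bar>x - y\<bar> + \<bar>s - s'\<bar> \<le> r \<Longrightarrow>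
    \<bar>px u x s - px u y s'\<bar> \<le> e\<^sup>2 * (2 * K + M * r)"
  by (rule abs_le_weaken_expansion_bound[OF px_u_diff])

lemma vtx_eq:
  assumes "1 \<le> i"
  shows "vtx dt h v u s i = (v (mid h i + h) s - v (mid h i - h) s) / (2 * h)
     + (u (mid h i + h) s + u (mid h i - h) s - 2 * u (mid h i) s) / (2 * dt)"
  using h_pos dt_pos unfolding vtx_def mid_Suc mid_pred[OF assms] by (simp add: field_simps)

lemma utx_eq:
  assumes "1 \<le> i"
  shows "utx dt h v u s i = (u (mid h i + h) s - u (mid h i - h) s) / (2 * h)
     + (v (mid h i + h) s + v (mid h i - h) s - 2 * v (mid h i) s) / (2 * dt)"
  using h_pos dt_pos unfolding utx_def mid_Suc mid_pred[OF assms] by (simp add: field_simps)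

lemma abs_second_difference_over_dt:
  assumes "\<bar>Q\<bar> \<le> 2 * h * (e\<^sup>2 * (K + M))"
  shows "\<bar>Q / (2 * dt)\<bar> \<le> e\<^sup>2 * (K + M) / CFL"
proof -
  have "\<bar>Q / (2 * dt)\<bar> \<le> 2 * h * (e\<^sup>2 * (K + M)) / (2 * dt)"
    using divide_right_mono[OF assms, of "2 * dt"] dt_pos by simp
  also have "\<dots> = e\<^sup>2 * (K + M) / CFL" using h_eq dt_pos by simp
  finally show ?thesis .
qed

definition "c1 = M + K + (K + M) / CFL"
definition "c2 = 2 * K + 2 * M + (K + M) / CFL"
definition "c3 = (M + K) / CFL + c2 + 2 * K + M"
definition "c4 = c3 + (2 * K + M) / CFL"
definition "c5 = 2 * K + M / CFL + 2 * M + (M + K) + c1"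
definition "c6 = c5 / (1 - e0)"
definition "c7 = (2 * K + 2 * M) / CFL"

lemma consts_nonneg: "0 \<le> c1" "0 \<le> c2" "0 \<le> c3" "0 \<le> c4" "0 \<le> c5" "0 \<le> c6" "0 \<le> c7"
  using K M CFL e unfolding c1_def c2_def c3_def c4_def c5_def c6_def c7_def by auto

lemma abs_vtx_le:
  assumes "1 \<le> i" "0 \<le> s"
  shows "\<bar>vtx dt h v u s i\<bar> \<le> e\<^sup>2 * c1"
proof -
  let ?m = "mid h i"
  have "\<bar>v (?m + h) s - v (?m - h) s\<bar> \<le> e\<^sup>2 * (M + K) * \<bar>(?m + h) - (?m - h)\<bar>"
    by (rule abs_diff_le_by_deriv_bound[of "\<lambda>y. v y s" "\<lambda>y. px v y s"])
      (use smooth2_has_px[OF smooth(1)] abs_px_v_le[OF assms(2)] in auto)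
  then have "\<bar>(v (?m + h) s - v (?m - h) s) / (2 * h)\<bar> \<le> e\<^sup>2 * (M + K)"
    using h_pos by (simp add: divide_le_eq)
  moreover have "\<bar>(u (?m + h) s + u (?m - h) s - 2 * u ?m s) / (2 * dt)\<bar> \<le> e\<^sup>2 * (K + M) / CFL"
    by (rule abs_second_difference_over_dt[OF second_difference_u[OF assms(2)]])
  ultimately have "\<bar>vtx dt h v u s i\<bar> \<le> e\<^sup>2 * (M + K) + e\<^sup>2 * (K + M) / CFL"
    unfolding vtx_eq[OF assms(1)] by (rule order.trans[OF abs_triangle_ineq add_mono])
  then show ?thesis unfolding c1_def by (simp add: algebra_simps)
qed

lemma utx_error:
  assumes "1 \<le> i" "\<bar>x - mid h i\<bar> \<le> h"
  shows "\<bar>utx dt h v u t i - px u x t\<bar> \<le> e\<^sup>2 * c2"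
proof -
  let ?m = "mid h i"
  obtain z where z: "min (?m - h) (?m + h) \<le> z" "z \<le> max (?m - h) (?m + h)"
      "u (?m + h) t - u (?m - h) t = ((?m + h) - (?m - h)) * px u z t"
    using mvt_between[of "\<lambda>y. u y t" "\<lambda>y. px u y t"] smooth2_has_px[OF smooth(2)] by blast
  have "(u (?m + h) t - u (?m - h) t) / (2 * h) = px u z t" using z(3) h_pos by simp
  then have "utx dt h v u t i - px u x t
      = (px u z t - px u x t) + (v (?m + h) t + v (?m - h) t - 2 * v ?m t) / (2 * dt)"
    unfolding utx_eq[OF assms(1)] by simp
  moreover have "\<bar>px u z t - px u x t\<bar> \<le> e\<^sup>2 * (2 * K + M * 2)"
    using z(1,2) assms(2) h_le_1 by (intro px_u_diff_le[OF t t]) (auto simp: abs_le_iff)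
  moreover have "\<bar>(v (?m + h) t + v (?m - h) t - 2 * v ?m t) / (2 * dt)\<bar> \<le> e\<^sup>2 * (K + M) / CFL"
    by (rule abs_second_difference_over_dt[OF second_difference_v[OF t]])
  ultimately have "\<bar>utx dt h v u t i - px u x t\<bar> \<le> e\<^sup>2 * (2 * K + M * 2) + e\<^sup>2 * (K + M) / CFL"
    by (smt (verit))
  then show ?thesis unfolding c2_def by (simp add: algebra_simps)
qed

lemma iota1_error:
  assumes i: "i \<in> {1..N}" and x: "x \<in> open_cell N i"
  shows "\<bar>iota1 dt h v u t i - v x (t + dt)\<bar> \<le> e\<^sup>2 * dt * c3"
proof -
  note cx = open_cell_bounds[OF i x]
  let ?m = "mid h i"
  obtain s where s: "t < s" "s < t + dt" "v x (t + dt) - v x t = (t + dt - t) * pt v x s"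
    using MVT2[of t "t + dt" "\<lambda>s. v x s" "\<lambda>s. pt v x s"] dt_pos smooth2_has_pt[OF smooth(1)] by auto
  have "pt v x s = px u x s" using pde(1)[OF cx(1,2)] s(1) t by simp
  then have eq: "iota1 dt h v u t i - v x (t + dt) = (v ?m t - v x t)
      + dt * (utx dt h v u t i - px u x t) + dt * (px u x t - px u x s)"
    unfolding iota1_def using s(3) by (simp add: algebra_simps)
  have "\<bar>v ?m t - v x t\<bar> \<le> e\<^sup>2 * (M + K) * \<bar>?m - x\<bar>"
    by (rule abs_diff_le_by_deriv_bound[of "\<lambda>y. v y t" "\<lambda>y. px v y t"])
      (use smooth2_has_px[OF smooth(1)] abs_px_v_le[OF t] in auto)
  also have "\<dots> \<le> e\<^sup>2 * (M + K) * h"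
    using cx(3) h_pos K M by (intro mult_left_mono) (auto simp: abs_minus_commute)
  finally have b1: "\<bar>v ?m t - v x t\<bar> \<le> e\<^sup>2 * dt * ((M + K) / CFL)"
    using h_eq by (simp add: mult.commute mult.left_commute)
  have "\<bar>utx dt h v u t i - px u x t\<bar> \<le> e\<^sup>2 * c2"
    by (rule utx_error) (use i cx(3) h_pos in auto)
  then have b2: "\<bar>dt * (utx dt h v u t i - px u x t)\<bar> \<le> e\<^sup>2 * dt * c2"
    using dt_pos by (simp add: abs_mult mult_left_mono mult.commute mult.left_commute)
  have "\<bar>px u x t - px u x s\<bar> \<le> e\<^sup>2 * (2 * K + M * 1)"
    using s t dt_le_h h_le_1 by (intro px_u_diff_le) auto
  then have b3: "\<bar>dt * (px u x t - px u x s)\<bar> \<le> e\<^sup>2 * dt * (2 * K + M)"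
    using dt_pos by (simp add: abs_mult mult_left_mono mult.commute mult.left_commute)
  have "\<bar>iota1 dt h v u t i - v x (t + dt)\<bar>
      \<le> e\<^sup>2 * dt * ((M + K) / CFL) + e\<^sup>2 * dt * c2 + e\<^sup>2 * dt * (2 * K + M)"
    unfolding eq using b1 b2 b3 by linarith
  then show ?thesis unfolding c3_def by (simp add: algebra_simps)
qed

text \<open>\<open>vI\<close> interpolates the exact \<open>v(t\<^sup>n\<^sup>+\<^sup>1)\<close> in \<open>V\<^sub>h\<close>; \<open>exact_slope\<close> is the value of
  \<open>d/dx v\<^sub>h\<^sup>n\<^sup>+\<^sup>1\<close> for which the update of \<open>u\<close> would be exact.\<close>

definition "vI = nodal_interp N (\<lambda>y. v y (t + dt))"
definition "exact_slope = (\<lambda>x. e\<^sup>2 / (1 - e) *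
    ((u x (t + dt) - u x t) / dt - vtx dt h v u t (cell h x) / e - g x t))"
definition "flux = (\<lambda>x. gam e dt * exact_slope x + dt\<^sup>2 * (1 - e) * iota2 e dt h v u g t (cell h x))"
definition "flux_ref = dt\<^sup>2 * (1 - e) * ((u 0 (t + dt) - u 0 t) / dt)"

lemma e2_le_dt: "e\<^sup>2 \<le> dt"
  using e e_le_dt by (smt (verit) mult_left_le power2_eq_square)

lemma vI_in_Vh: "vI \<in> Vh N"
  unfolding vI_def by (rule nodal_interp_in_Vh[OF N]) (use bc t dt_pos in auto)

lemma vI_on_cell:
  assumes i: "i \<in> {1..N}" and x: "x \<in> open_cell N i"
  obtains \<xi> where "node h i \<le> \<xi>" "\<xi> \<le> node h i + h"
    "vI x = v (node h i) (t + dt) + (x - node h i) * px v \<xi> (t + dt)"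
    "deriv vI x = px v \<xi> (t + dt)"
proof -
  note cx = open_cell_bounds[OF i x]
  let ?n = "node h i" and ?V = "\<lambda>y. v y (t + dt)"
  have nh: "mesh_node N = node h" using h by simp
  have V0: "?V 0 = 0" using bc t dt_pos by simp
  obtain \<xi> where \<xi>: "min ?n (?n + h) \<le> \<xi>" "\<xi> \<le> max ?n (?n + h)"
      "?V (?n + h) - ?V ?n = (?n + h - ?n) * px v \<xi> (t + dt)"
    using mvt_between[of ?V "\<lambda>y. px v y (t + dt)"] smooth2_has_px[OF smooth(1)] by blast
  have slope: "real N * (?V (?n + h) - ?V ?n) = px v \<xi> (t + dt)"
    using \<xi>(3) h N by simp
  have "vI x = ?V ?n + (x - ?n) * (real N * (?V (?n + h) - ?V ?n))"
    unfolding vI_def using nodal_interp_on_cell[OF N i, of x ?V] V0 cx(4,5) node_Suc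
    by (simp add: nh mult.assoc)
  moreover have "deriv vI x = real N * (?V (?n + h) - ?V ?n)"
    unfolding vI_def using deriv_nodal_interp[OF N i x, of ?V] V0 node_Suc by (simp add: nh)
  ultimately show ?thesis using that \<xi>(1,2) h_pos slope by simp
qed

lemma vI_error:
  assumes i: "i \<in> {1..N}" and x: "x \<in> open_cell N i"
  shows "\<bar>vI x - v x (t + dt)\<bar> \<le> e\<^sup>2 * dt * ((2 * K + M) / CFL)"
proof -
  note cx = open_cell_bounds[OF i x]
  let ?n = "node h i"
  have tt: "0 \<le> t + dt" using t dt_pos by simp
  obtain \<xi> where \<xi>: "?n \<le> \<xi>" "\<xi> \<le> ?n + h" "vI x = v ?n (t + dt) + (x - ?n) * px v \<xi> (t + dt)"
    using vI_on_cell[OF i x] by blast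
  obtain \<eta> where \<eta>: "min ?n x \<le> \<eta>" "\<eta> \<le> max ?n x"
      "v x (t + dt) - v ?n (t + dt) = (x - ?n) * px v \<eta> (t + dt)"
    using mvt_between[of "\<lambda>y. v y (t + dt)" "\<lambda>y. px v y (t + dt)"] smooth2_has_px[OF smooth(1)]
    by blast
  have "\<bar>px v \<xi> (t + dt) - px v \<eta> (t + dt)\<bar> \<le> e\<^sup>2 * (2 * K + M * 1)"
    using \<xi>(1,2) \<eta>(1,2) cx(4,5) h_le_1 by (intro px_v_diff_le[OF tt tt]) (auto simp: abs_le_iff)
  moreover have "\<bar>x - ?n\<bar> \<le> h" using cx(4,5) by simp
  ultimately have "\<bar>(x - ?n) * (px v \<xi> (t + dt) - px v \<eta> (t + dt))\<bar> \<le> h * (e\<^sup>2 * (2 * K + M))"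
    unfolding abs_mult by (intro mult_mono) auto
  moreover have "vI x - v x (t + dt) = (x - ?n) * (px v \<xi> (t + dt) - px v \<eta> (t + dt))"
    using \<xi>(3) \<eta>(3) by (simp add: algebra_simps)
  ultimately show ?thesis using h_eq by (simp add: mult.commute mult.left_commute)
qed

lemma exact_slope_eq:
  assumes i: "i \<in> {1..N}" and x: "x \<in> open_cell N i"
  obtains s where "t < s" "s < t + dt"
    "(1 - e) * exact_slope x = px v x s + e\<^sup>2 * (g x s - g x t) - e * vtx dt h v u t i"
proof -
  note cx = open_cell_bounds[OF i x]
  obtain s where s: "t < s" "s < t + dt" "u x (t + dt) - u x t = (t + dt - t) * pt u x s"
    using MVT2[of t "t + dt" "\<lambda>s. u x s" "\<lambda>s. pt u x s"] dt_pos smooth2_has_pt[OF smooth(2)] by auto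
  have "pt u x s = px v x s / e\<^sup>2 + g x s" using pde(2)[OF cx(1,2)] s(1) t by simp
  moreover have "e \<noteq> 0" "1 - e \<noteq> 0" using e by auto
  ultimately have "(1 - e) * exact_slope x = px v x s + e\<^sup>2 * (g x s - g x t) - e * vtx dt h v u t i"
    unfolding exact_slope_def cx(6) using s(3) dt_pos by (simp add: field_simps power2_eq_square)
  then show ?thesis using that s(1,2) by blast
qed

lemma abs_e_px_v_le:
  assumes "0 \<le> s"
  shows "\<bar>e * px v x s\<bar> \<le> e\<^sup>2 * dt * (M + K)"
proof -
  have "\<bar>e * px v x s\<bar> \<le> e * (e\<^sup>2 * (M + K))"
    using abs_px_v_le[OF assms] e by (simp add: abs_mult mult_left_mono)
  also have "\<dots> \<le> e\<^sup>2 * dt * (M + K)" using e_times_le K M by simp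
  finally show ?thesis .
qed

lemma abs_e_vtx_le:
  assumes "1 \<le> i"
  shows "\<bar>e * vtx dt h v u t i\<bar> \<le> e\<^sup>2 * dt * c1"
proof -
  have "\<bar>e * vtx dt h v u t i\<bar> \<le> e * (e\<^sup>2 * c1)"
    using abs_vtx_le[OF assms t] e by (simp add: abs_mult mult_left_mono)
  also have "\<dots> \<le> e\<^sup>2 * dt * c1" using e_times_le consts_nonneg by simp
  finally show ?thesis .
qed

lemma abs_g_time_diff_le:
  assumes "t \<le> s" "s \<le> t + dt"
  shows "\<bar>g x s - g x t\<bar> \<le> M * dt"
proof -
  have "\<bar>g x s - g x t\<bar> \<le> M * \<bar>s - t\<bar>"
    by (rule abs_diff_le_by_deriv_bound[of "\<lambda>s. g x s" "\<lambda>s. pt g x s"])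
      (use smooth2_has_pt[OF smooth(3)] g_bounds t assms in auto)
  also have "\<dots> \<le> M * dt" using assms M by (intro mult_left_mono) auto
  finally show ?thesis .
qed

lemma deriv_vI_error:
  assumes i: "i \<in> {1..N}" and x: "x \<in> open_cell N i"
  shows "\<bar>deriv vI x - exact_slope x\<bar> \<le> e\<^sup>2 * dt * c6"
proof -
  obtain \<xi> where \<xi>: "node h i \<le> \<xi>" "\<xi> \<le> node h i + h" "deriv vI x = px v \<xi> (t + dt)"
    using vI_on_cell[OF i x] by blast
  obtain s where s: "t < s" "s < t + dt"
    and T: "(1 - e) * exact_slope x = px v x s + e\<^sup>2 * (g x s - g x t) - e * vtx dt h v u t i"
    using exact_slope_eq[OF i x] by blast
  note cx = open_cell_bounds[OF i x]
  have tt: "0 \<le> t + dt" "0 \<le> s" using t dt_pos s by auto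
  have "\<bar>px v \<xi> (t + dt) - px v x s\<bar> \<le> 2 * K * e ^ 3 + e\<^sup>2 * (M * (h + dt))"
    using px_v_diff[OF tt, of \<xi> x] \<xi>(1,2) cx(4,5) s M
    by (smt (verit, best) mult_left_mono zero_le_power2)
  also have "\<dots> \<le> 2 * K * (e\<^sup>2 * dt) + e\<^sup>2 * (M * (h + dt))"
    using e_cube_le K by (simp add: mult_left_mono)
  also have "\<dots> = e\<^sup>2 * dt * (2 * K + M / CFL + M)"
    using h_eq CFL by (simp add: field_simps)
  finally have a: "\<bar>px v \<xi> (t + dt) - px v x s\<bar> \<le> e\<^sup>2 * dt * (2 * K + M / CFL + M)" .
  have b: "\<bar>e * px v \<xi> (t + dt)\<bar> \<le> e\<^sup>2 * dt * (M + K)"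
    by (rule abs_e_px_v_le[OF tt(1)])
  have "e\<^sup>2 * \<bar>g x s - g x t\<bar> \<le> e\<^sup>2 * (M * dt)"
    using abs_g_time_diff_le[of s] s by (simp add: mult_left_mono)
  then have c: "\<bar>e\<^sup>2 * (g x s - g x t)\<bar> \<le> e\<^sup>2 * dt * M" by (simp add: abs_mult mult_ac)
  have d: "\<bar>e * vtx dt h v u t i\<bar> \<le> e\<^sup>2 * dt * c1"
    using abs_e_vtx_le i by simp
  have eq: "(1 - e) * (deriv vI x - exact_slope x) = (px v \<xi> (t + dt) - px v x s)
      - e * px v \<xi> (t + dt) - e\<^sup>2 * (g x s - g x t) + e * vtx dt h v u t i"
    using T \<xi>(3) by (simp add: algebra_simps)
  have "\<bar>(1 - e) * (deriv vI x - exact_slope x)\<bar>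
      \<le> e\<^sup>2 * dt * (2 * K + M / CFL + M) + e\<^sup>2 * dt * (M + K) + e\<^sup>2 * dt * M + e\<^sup>2 * dt * c1"
    unfolding eq using a b c d by (simp add: abs_le_iff)
  also have "\<dots> = e\<^sup>2 * dt * c5" unfolding c5_def by (simp add: algebra_simps)
  finally have "(1 - e) * \<bar>deriv vI x - exact_slope x\<bar> \<le> e\<^sup>2 * dt * c5"
    using one_minus_e by (simp add: abs_mult)
  then have "(1 - e0) * \<bar>deriv vI x - exact_slope x\<bar> \<le> e\<^sup>2 * dt * c5"
    using one_minus_e by (smt (verit) mult_right_mono abs_ge_zero)
  then show ?thesis unfolding c6_def using e by (simp add: field_simps)
qed

lemma flux_diff_eq:
  assumes i: "i \<in> {1..N}" and x: "x \<in> open_cell N i"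
  shows "flux x - flux_ref = dt\<^sup>2 * (1 - e) *
    ((u x (t + dt) - u x t - (u 0 (t + dt) - u 0 t)) / dt + (g (mid h i) t - g x t))"
proof -
  have "e \<noteq> 0" "1 - e \<noteq> 0" using e by auto
  then show ?thesis
    unfolding flux_def flux_ref_def exact_slope_def gam_def iota2_def open_cell_bounds(6)[OF i x]
    using dt_pos by (simp add: field_simps power2_eq_square)
qed

lemma flux_error:
  assumes i: "i \<in> {1..N}" and x: "x \<in> open_cell N i"
  shows "\<bar>flux x - flux_ref\<bar> \<le> dt ^ 3 * c7"
proof -
  note cx = open_cell_bounds[OF i x]
  let ?D = "\<lambda>y. u y (t + dt) - u y t"
  have D: "\<And>y. (?D has_real_derivative px u y (t + dt) - px u y t) (at y)"
    using smooth2_has_px[OF smooth(2)] by (intro DERIV_diff) auto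
  obtain \<xi> where \<xi>: "?D x - ?D 0 = (x - 0) * (px u \<xi> (t + dt) - px u \<xi> t)"
    using mvt_between[OF D, of 0 x] by auto
  have "\<bar>px u \<xi> (t + dt) - px u \<xi> t\<bar> \<le> 2 * K * (e\<^sup>2 * dt) + e\<^sup>2 * (M * dt)"
    using px_u_diff[of "t + dt" t \<xi> \<xi>] t dt_pos e_cube_le K by (smt (verit) mult_left_mono)
  then have "\<bar>px u \<xi> (t + dt) - px u \<xi> t\<bar> \<le> dt * (e\<^sup>2 * (2 * K + M))"
    by (simp add: algebra_simps)
  then have "\<bar>?D x - ?D 0\<bar> \<le> 1 * (dt * (e\<^sup>2 * (2 * K + M)))"
    unfolding \<xi> abs_mult using cx(1,2) by (intro mult_mono) auto
  then have b1: "\<bar>(?D x - ?D 0) / dt\<bar> \<le> e\<^sup>2 * (2 * K + M)"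
    using dt_pos by (simp add: divide_le_eq mult.commute)
  have "\<bar>g (mid h i) t - g x t\<bar> \<le> M * \<bar>mid h i - x\<bar>"
    by (rule abs_diff_le_by_deriv_bound[of "\<lambda>y. g y t" "\<lambda>y. px g y t"])
      (use smooth2_has_px[OF smooth(3)] g_bounds t in auto)
  also have "\<dots> \<le> M * h" using cx(3) M h_pos by (intro mult_left_mono) (auto simp: abs_minus_commute)
  finally have b2: "\<bar>g (mid h i) t - g x t\<bar> \<le> M * h" .
  have "\<bar>(?D x - ?D 0) / dt + (g (mid h i) t - g x t)\<bar> \<le> e\<^sup>2 * (2 * K + M) + M * h"
    using b1 b2 by (rule order.trans[OF abs_triangle_ineq add_mono])
  moreover have "e\<^sup>2 * (2 * K + M) \<le> h * (2 * K + M)"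
    using e2_le_dt dt_le_h K M by (intro mult_right_mono) auto
  ultimately have b: "\<bar>(?D x - ?D 0) / dt + (g (mid h i) t - g x t)\<bar> \<le> h * (2 * K + 2 * M)"
    by (simp add: algebra_simps)
  have "\<bar>flux x - flux_ref\<bar> = dt\<^sup>2 * (1 - e) * \<bar>(?D x - ?D 0) / dt + (g (mid h i) t - g x t)\<bar>"
    unfolding flux_diff_eq[OF i x] abs_mult using one_minus_e by (simp add: diff_divide_distrib)
  also have "\<dots> \<le> dt\<^sup>2 * 1 * (h * (2 * K + 2 * M))"
    using b e by (intro mult_mono mult_left_mono) auto
  also have "\<dots> = dt ^ 3 * c7"
    unfolding c7_def h_eq using CFL by (simp add: field_simps power3_eq_cube power2_eq_square)
  finally show ?thesis .
qed

lemma cellwise_continuous_u: "cellwise_continuous N (\<lambda>x. u x s)"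
  by (rule cellwise_continuous_if_continuous[OF smooth2_continuous_on_x[OF smooth(2)]])

lemma cellwise_continuous_g: "cellwise_continuous N (\<lambda>x. g x s)"
  by (rule cellwise_continuous_if_continuous[OF smooth2_continuous_on_x[OF smooth(3)]])

lemma cellwise_continuous_cell: "cellwise_continuous N (\<lambda>x. c (cell h x))"
  using cellwise_continuous_cell_fun[of N c] h by simp

lemmas cellwise_continuous_intros =
  cellwise_continuous_add cellwise_continuous_diff cellwise_continuous_mult
  cellwise_continuous_divide cellwise_continuous_power2 cellwise_continuous_const
  cellwise_continuous_u cellwise_continuous_g cellwise_continuous_cell

lemma cellwise_continuous_exact_slope: "cellwise_continuous N exact_slope"
  unfolding exact_slope_def by (intro cellwise_continuous_intros)

lemma cellwise_continuous_flux: "cellwise_continuous N flux"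
  unfolding flux_def by (intro cellwise_continuous_intros cellwise_continuous_exact_slope)

lemma gam_pos: "0 < gam e dt"
  unfolding gam_def using e dt_pos by simp

text \<open>The residuals against which \<open>E = v\<^sub>h\<^sup>n\<^sup>+\<^sup>1 - vI\<close> and \<open>E'\<close> are paired in \<open>a(E, E)\<close>.\<close>

definition "alpha = (\<lambda>x. iota1 dt h v u t (cell h x) - vI x)"
definition "beta = (\<lambda>x. flux x - flux_ref - gam e dt * (exact_slope x - deriv vI x))"

lemma alpha_bound:
  assumes i: "i \<in> {1..N}" and x: "x \<in> open_cell N i"
  shows "\<bar>alpha x\<bar> \<le> e\<^sup>2 * dt * c4"
proof -
  have "alpha x = (iota1 dt h v u t i - v x (t + dt)) - (vI x - v x (t + dt))"
    unfolding alpha_def using open_cell_bounds(6)[OF i x] by simp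
  then have "\<bar>alpha x\<bar> \<le> e\<^sup>2 * dt * c3 + e\<^sup>2 * dt * ((2 * K + M) / CFL)"
    using iota1_error[OF i x] vI_error[OF i x] by (simp add: abs_le_iff)
  then show ?thesis unfolding c4_def by (simp add: algebra_simps)
qed

lemma beta_bound:
  assumes i: "i \<in> {1..N}" and x: "x \<in> open_cell N i"
  shows "\<bar>beta x\<bar> \<le> dt ^ 3 * (c7 + c6)"
proof -
  have "\<bar>gam e dt * (exact_slope x - deriv vI x)\<bar> \<le> gam e dt * (e\<^sup>2 * dt * c6)"
    using deriv_vI_error[OF i x] gam_pos by (simp add: abs_mult abs_minus_commute mult_left_mono)
  also have "\<dots> = dt ^ 3 * ((1 - e)\<^sup>2 * c6)"
    unfolding gam_def using e by (simp add: field_simps power2_eq_square power3_eq_cube)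
  also have "\<dots> \<le> dt ^ 3 * c6"
    using e dt_pos consts_nonneg
    by (intro mult_left_mono mult_left_le_one_le) (auto simp: power_le_one)
  finally show ?thesis
    using flux_error[OF i x] unfolding beta_def by (simp add: abs_le_iff algebra_simps)
qed

lemma energy_identity:
  assumes vh: "vh \<in> Vh N" and gal: "\<forall>\<phi>\<in>Vh N. aform e dt vh \<phi> = iota_h e dt h v u g t \<phi>"
  defines "E \<equiv> \<lambda>y. vh y - vI y"
  shows "gam e dt / 2 * integral {0..1} (\<lambda>x. (deriv E x)\<^sup>2) = integral {0..1} (\<lambda>x.
    alpha x * E x - beta x * deriv E x - (E x)\<^sup>2 - gam e dt / 2 * (deriv E x)\<^sup>2)"
    (is "_ = integral _ ?W")
proof -
  define P1 where "P1 = (\<lambda>x. gam e dt * deriv vh x * deriv E x + vh x * E x)"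
  define P2 where "P2 = (\<lambda>x. iota1 dt h v u t (cell h x) * E x
    - dt\<^sup>2 * (1 - e) * iota2 e dt h v u g t (cell h x) * deriv E x)"
  have EV: "E \<in> Vh N" unfolding E_def by (rule Vh_diff[OF vh vI_in_Vh])
  note cellwise = cellwise_continuous_Vh[OF EV] cellwise_continuous_deriv_Vh[OF EV]
    cellwise_continuous_Vh[OF vh] cellwise_continuous_deriv_Vh[OF vh]
    cellwise_continuous_Vh[OF vI_in_Vh] cellwise_continuous_deriv_Vh[OF vI_in_Vh]
    cellwise_continuous_exact_slope cellwise_continuous_flux
  note integrable = cellwise_continuous_integrable[OF N]
  have "gam e dt / 2 * (deriv E x)\<^sup>2 = P1 x - P2 x - flux_ref * deriv E x + ?W x"
    if "i \<in> {1..N}" "x \<in> open_cell N i" for i x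
    unfolding P1_def P2_def alpha_def beta_def flux_def E_def deriv_diff_Vh[OF vh vI_in_Vh that]
    by (simp add: algebra_simps power2_eq_square)
  then have "integral {0..1} (\<lambda>x. gam e dt / 2 * (deriv E x)\<^sup>2)
      = integral {0..1} (\<lambda>x. P1 x - P2 x - flux_ref * deriv E x + ?W x)"
    by (rule integral_eq_cellwise[OF N])
  also have "\<dots> = integral {0..1} P1 - integral {0..1} P2
      - integral {0..1} (\<lambda>x. flux_ref * deriv E x) + integral {0..1} ?W"
    unfolding P1_def P2_def alpha_def beta_def
    by (simp add: integral_add integral_diff integrable_diff integrable_add
        integrable cellwise_continuous_intros cellwise)
  also have "integral {0..1} P1 = integral {0..1} P2"
    using gal EV unfolding P1_def P2_def aform_def iota_h_def by simp
  also have "integral {0..1} (\<lambda>x. flux_ref * deriv E x) = 0"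
    using Vh_deriv_has_integral_0[OF N EV] by (simp add: integral_unique)
  finally show ?thesis by simp
qed

lemma energy_estimate:
  assumes vh: "vh \<in> Vh N" and gal: "\<forall>\<phi>\<in>Vh N. aform e dt vh \<phi> = iota_h e dt h v u g t \<phi>"
  shows "integral {0..1} (\<lambda>x. (deriv (\<lambda>y. vh y - vI y) x)\<^sup>2)
    \<le> 2 / gam e dt * ((e\<^sup>2 * dt * c4)\<^sup>2 / 4 + (dt ^ 3 * (c7 + c6))\<^sup>2 / (2 * gam e dt))"
proof -
  define E where "E = (\<lambda>y. vh y - vI y)"
  define \<gamma> where "\<gamma> = gam e dt"
  define A where "A = e\<^sup>2 * dt * c4"
  define B where "B = dt ^ 3 * (c7 + c6)"
  have gp: "0 < \<gamma>" unfolding \<gamma>_def by (rule gam_pos)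
  have EV: "E \<in> Vh N" unfolding E_def by (rule Vh_diff[OF vh vI_in_Vh])
  have le: "alpha x * E x - beta x * deriv E x - (E x)\<^sup>2 - \<gamma> / 2 * (deriv E x)\<^sup>2
      \<le> A\<^sup>2 / 4 + B\<^sup>2 / (2 * \<gamma>)"
    if ix: "i \<in> {1..N}" "x \<in> open_cell N i" for i x
  proof -
    have "(alpha x)\<^sup>2 \<le> A\<^sup>2" and b: "(beta x)\<^sup>2 \<le> B\<^sup>2"
      unfolding A_def B_def using alpha_bound[OF ix] beta_bound[OF ix] consts_nonneg dt_pos
      by (simp_all add: power2_le_iff_abs_le)
    then have 1: "alpha x * E x - (E x)\<^sup>2 \<le> A\<^sup>2 / 4"
      using mult_minus_square_le[of "alpha x" "E x"] by simp
    have "(beta x)\<^sup>2 / (2 * \<gamma>) \<le> B\<^sup>2 / (2 * \<gamma>)"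
      using b gp by (simp add: divide_right_mono)
    then have 2: "- beta x * deriv E x - \<gamma> / 2 * (deriv E x)\<^sup>2 \<le> B\<^sup>2 / (2 * \<gamma>)"
      using minus_mult_minus_half_square_le[OF gp, of "beta x" "deriv E x"] by simp
    show ?thesis using 1 2 by simp
  qed
  have "\<gamma> / 2 * integral {0..1} (\<lambda>x. (deriv E x)\<^sup>2) = integral {0..1} (\<lambda>x.
      alpha x * E x - beta x * deriv E x - (E x)\<^sup>2 - \<gamma> / 2 * (deriv E x)\<^sup>2)"
    unfolding E_def \<gamma>_def by (rule energy_identity[OF vh gal])
  also have "\<dots> \<le> integral {0..1} (\<lambda>x::real. A\<^sup>2 / 4 + B\<^sup>2 / (2 * \<gamma>))"
    using le cellwise_continuous_Vh[OF EV] cellwise_continuous_deriv_Vh[OF EV]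
      cellwise_continuous_Vh[OF vI_in_Vh] cellwise_continuous_deriv_Vh[OF vI_in_Vh]
      cellwise_continuous_exact_slope cellwise_continuous_flux
    unfolding alpha_def beta_def
    by (intro integral_le_cellwise[OF N] cellwise_continuous_integrable[OF N]
        cellwise_continuous_intros) auto
  finally have "\<gamma> / 2 * integral {0..1} (\<lambda>x. (deriv E x)\<^sup>2) \<le> A\<^sup>2 / 4 + B\<^sup>2 / (2 * \<gamma>)" by simp
  then show ?thesis unfolding E_def A_def B_def \<gamma>_def using gp by (simp add: field_simps \<gamma>_def)
qed

definition "ucoef = dt * (1 - e) / e\<^sup>2"

definition "Cf = c4\<^sup>2 + 2 * (c7 + c6)\<^sup>2 / (1 - e0)\<^sup>2 + 2 * c6\<^sup>2"

lemma uh_error_eq: "uh e dt h v u g t vh x - u x (t + dt) = ucoef * (deriv vh x - exact_slope x)"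
proof -
  have "e \<noteq> 0" "1 - e \<noteq> 0" "dt \<noteq> 0" using e dt_pos by auto
  then show ?thesis
    unfolding uh_def exact_slope_def ucoef_def by (simp add: field_simps power2_eq_square)
qed

lemma uh_error_sq_le:
  assumes vh: "vh \<in> Vh N"
  shows "integral {0..1} (\<lambda>x. (uh e dt h v u g t vh x - u x (t + dt))\<^sup>2)
    \<le> 2 * ucoef\<^sup>2 * integral {0..1} (\<lambda>x. (deriv (\<lambda>y. vh y - vI y) x)\<^sup>2)
      + 2 * ucoef\<^sup>2 * (e\<^sup>2 * dt * c6)\<^sup>2"
proof -
  define E where "E = (\<lambda>y. vh y - vI y)"
  define Z where "Z = e\<^sup>2 * dt * c6"
  have EV: "E \<in> Vh N" unfolding E_def by (rule Vh_diff[OF vh vI_in_Vh])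
  note cellwise = cellwise_continuous_deriv_Vh[OF EV] cellwise_continuous_deriv_Vh[OF vh]
    cellwise_continuous_exact_slope
  have "integral {0..1} (\<lambda>x. (uh e dt h v u g t vh x - u x (t + dt))\<^sup>2)
      = integral {0..1} (\<lambda>x. ucoef\<^sup>2 * (deriv vh x - exact_slope x)\<^sup>2)"
    unfolding uh_error_eq by (simp add: power_mult_distrib)
  also have "\<dots> \<le> integral {0..1} (\<lambda>x. 2 * ucoef\<^sup>2 * (deriv E x)\<^sup>2 + 2 * ucoef\<^sup>2 * Z\<^sup>2)"
  proof (rule integral_le_cellwise[OF N])
    show "(\<lambda>x. ucoef\<^sup>2 * (deriv vh x - exact_slope x)\<^sup>2) integrable_on {0..1}"
      "(\<lambda>x. 2 * ucoef\<^sup>2 * (deriv E x)\<^sup>2 + 2 * ucoef\<^sup>2 * Z\<^sup>2) integrable_on {0..1}"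
      by (intro cellwise_continuous_integrable[OF N] cellwise_continuous_intros cellwise)+
    fix i x assume ix: "i \<in> {1..N}" "x \<in> open_cell N i"
    have "deriv vh x - exact_slope x = deriv E x + (deriv vI x - exact_slope x)"
      unfolding E_def deriv_diff_Vh[OF vh vI_in_Vh ix] by simp
    moreover have "(deriv vI x - exact_slope x)\<^sup>2 \<le> Z\<^sup>2"
      unfolding Z_def using deriv_vI_error[OF ix] consts_nonneg dt_pos
      by (simp add: power2_le_iff_abs_le)
    moreover have "(a + b)\<^sup>2 \<le> 2 * a\<^sup>2 + 2 * b\<^sup>2" for a b :: real
      using sum_squares_ge_zero[of "a - b" 0] by (simp add: power2_eq_square algebra_simps)
    ultimately have "(deriv vh x - exact_slope x)\<^sup>2 \<le> 2 * (deriv E x)\<^sup>2 + 2 * Z\<^sup>2"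
      by (smt (verit))
    then have "ucoef\<^sup>2 * (deriv vh x - exact_slope x)\<^sup>2 \<le> ucoef\<^sup>2 * (2 * (deriv E x)\<^sup>2 + 2 * Z\<^sup>2)"
      by (rule mult_left_mono) simp
    then show "ucoef\<^sup>2 * (deriv vh x - exact_slope x)\<^sup>2 \<le> 2 * ucoef\<^sup>2 * (deriv E x)\<^sup>2 + 2 * ucoef\<^sup>2 * Z\<^sup>2"
      by (simp add: algebra_simps)
  qed
  also have "\<dots> = 2 * ucoef\<^sup>2 * integral {0..1} (\<lambda>x. (deriv E x)\<^sup>2) + 2 * ucoef\<^sup>2 * Z\<^sup>2"
    by (simp add: integral_add cellwise_continuous_integrable[OF N]
        cellwise_continuous_intros cellwise)
  finally show ?thesis unfolding E_def Z_def .
qed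

lemma error_constant_le:
  "2 * ucoef\<^sup>2 * (2 / gam e dt * ((e\<^sup>2 * dt * c4)\<^sup>2 / 4 + (dt ^ 3 * (c7 + c6))\<^sup>2 / (2 * gam e dt)))
     + 2 * ucoef\<^sup>2 * (e\<^sup>2 * dt * c6)\<^sup>2 \<le> dt ^ 4 * Cf"
proof -
  define \<gamma> where "\<gamma> = gam e dt"
  have ne: "e \<noteq> 0" "1 - e \<noteq> 0" "dt \<noteq> 0" using e dt_pos by auto
  have gp: "0 < \<gamma>" unfolding \<gamma>_def by (rule gam_pos)
  have c: "ucoef\<^sup>2 = \<gamma> / e\<^sup>2"
    unfolding ucoef_def \<gamma>_def gam_def using ne by (simp add: field_simps power2_eq_square)
  have eg: "e\<^sup>2 * \<gamma> = dt\<^sup>2 * (1 - e)\<^sup>2" unfolding \<gamma>_def gam_def using ne by (simp add: field_simps)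
  have "2 * ucoef\<^sup>2 * (2 / \<gamma> * ((e\<^sup>2 * dt * c4)\<^sup>2 / 4 + (dt ^ 3 * (c7 + c6))\<^sup>2 / (2 * \<gamma>)))
      = (e\<^sup>2 * dt * c4)\<^sup>2 / e\<^sup>2 + 2 * (dt ^ 3 * (c7 + c6))\<^sup>2 / (e\<^sup>2 * \<gamma>)"
    unfolding c using gp ne by (simp add: field_simps)
  also have "(e\<^sup>2 * dt * c4)\<^sup>2 / e\<^sup>2 = e\<^sup>2 * dt\<^sup>2 * c4\<^sup>2"
    using ne by (simp add: field_simps power2_eq_square)
  also have "2 * (dt ^ 3 * (c7 + c6))\<^sup>2 / (e\<^sup>2 * \<gamma>) = dt ^ 4 * (2 * (c7 + c6)\<^sup>2 / (1 - e)\<^sup>2)"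
  proof -
    have "(dt ^ 3 * (c7 + c6))\<^sup>2 = dt\<^sup>2 * (dt ^ 4 * (c7 + c6)\<^sup>2)"
      by (simp add: power2_eq_square power3_eq_cube power4_eq_xxxx algebra_simps)
    then have "2 * (dt ^ 3 * (c7 + c6))\<^sup>2 / (e\<^sup>2 * \<gamma>)
        = dt\<^sup>2 * (2 * dt ^ 4 * (c7 + c6)\<^sup>2) / (dt\<^sup>2 * (1 - e)\<^sup>2)"
      unfolding eg by (simp add: algebra_simps)
    also have "\<dots> = dt ^ 4 * (2 * (c7 + c6)\<^sup>2 / (1 - e)\<^sup>2)"
      using ne by (subst mult_divide_mult_cancel_left) auto
    finally show ?thesis .
  qed
  finally have ab: "2 * ucoef\<^sup>2 * (2 / \<gamma> * ((e\<^sup>2 * dt * c4)\<^sup>2 / 4 + (dt ^ 3 * (c7 + c6))\<^sup>2 / (2 * \<gamma>)))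
      = e\<^sup>2 * dt\<^sup>2 * c4\<^sup>2 + dt ^ 4 * (2 * (c7 + c6)\<^sup>2 / (1 - e)\<^sup>2)" .
  have "2 * ucoef\<^sup>2 * (e\<^sup>2 * dt * c6)\<^sup>2 = dt ^ 4 * (2 * (1 - e)\<^sup>2 * c6\<^sup>2)"
    unfolding c \<gamma>_def gam_def using ne by (simp add: field_simps power2_eq_square power4_eq_xxxx)
  with ab have "2 * ucoef\<^sup>2 * (2 / gam e dt * ((e\<^sup>2 * dt * c4)\<^sup>2 / 4
        + (dt ^ 3 * (c7 + c6))\<^sup>2 / (2 * gam e dt)))
     + 2 * ucoef\<^sup>2 * (e\<^sup>2 * dt * c6)\<^sup>2
     = e\<^sup>2 * dt\<^sup>2 * c4\<^sup>2 + dt ^ 4 * (2 * (c7 + c6)\<^sup>2 / (1 - e)\<^sup>2) + dt ^ 4 * (2 * (1 - e)\<^sup>2 * c6\<^sup>2)"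
    unfolding \<gamma>_def by simp
  also have "\<dots> \<le> dt ^ 4 * c4\<^sup>2 + dt ^ 4 * (2 * (c7 + c6)\<^sup>2 / (1 - e0)\<^sup>2) + dt ^ 4 * (2 * c6\<^sup>2)"
  proof (intro add_mono mult_left_mono)
    have "e\<^sup>2 * dt\<^sup>2 \<le> dt\<^sup>2 * dt\<^sup>2" using e e_le_dt by (intro mult_right_mono power_mono) auto
    then show "e\<^sup>2 * dt\<^sup>2 * c4\<^sup>2 \<le> dt ^ 4 * c4\<^sup>2"
      by (intro mult_right_mono) (auto simp: power4_eq_xxxx power2_eq_square)
    show "2 * (c7 + c6)\<^sup>2 / (1 - e)\<^sup>2 \<le> 2 * (c7 + c6)\<^sup>2 / (1 - e0)\<^sup>2"
      using e by (intro divide_left_mono power_mono) auto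
    show "2 * (1 - e)\<^sup>2 * c6\<^sup>2 \<le> 2 * c6\<^sup>2"
      using e by (simp add: power_le_one mult_left_le_one_le)
  qed auto
  finally show ?thesis unfolding Cf_def by (simp add: algebra_simps)
qed

lemma step_error:
  assumes vh: "vh \<in> Vh N" and gal: "\<forall>\<phi>\<in>Vh N. aform e dt vh \<phi> = iota_h e dt h v u g t \<phi>"
  shows "L2norm01 (\<lambda>x. uh e dt h v u g t vh x - u x (t + dt)) \<le> sqrt Cf * dt\<^sup>2"
proof -
  have "integral {0..1} (\<lambda>x. (uh e dt h v u g t vh x - u x (t + dt))\<^sup>2) \<le> dt ^ 4 * Cf"
    using uh_error_sq_le[OF vh] energy_estimate[OF vh gal] error_constant_le
    by (smt (verit) mult_left_mono zero_le_mult_iff zero_le_numeral zero_le_power2)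
  then have "L2norm01 (\<lambda>x. uh e dt h v u g t vh x - u x (t + dt)) \<le> sqrt ((dt\<^sup>2)\<^sup>2 * Cf)"
    unfolding L2norm01_def by (simp add: real_sqrt_le_mono flip: power_mult)
  also have "\<dots> = sqrt ((dt\<^sup>2)\<^sup>2) * sqrt Cf" by (rule real_sqrt_mult)
  also have "\<dots> = sqrt Cf * dt\<^sup>2" by (simp only: real_sqrt_abs) simp
  finally show ?thesis .
qed

end

theorem theorem4:
  fixes eps0 CFL K :: real
    and v u :: "real \<Rightarrow> real \<Rightarrow> real \<Rightarrow> real"
    and v2 u2 g :: "real \<Rightarrow> real \<Rightarrow> real"
  assumes eps0: "0 < eps0" "eps0 < 1"
    and CFL: "0 < CFL" "CFL < 1"
    and smooth: "\<forall>\<epsilon>. 0 < \<epsilon> \<and> \<epsilon> \<le> eps0 \<longrightarrow> smooth2 (v \<epsilon>) \<and> smooth2 (u \<epsilon>)"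
    and pde: "\<forall>\<epsilon> x t. 0 < \<epsilon> \<and> \<epsilon> \<le> eps0 \<and> 0 < x \<and> x < 1 \<and> 0 < t \<longrightarrow>
                 pt (v \<epsilon>) x t - px (u \<epsilon>) x t = 0 \<and>
                 pt (u \<epsilon>) x t - px (v \<epsilon>) x t / \<epsilon>\<^sup>2 = g x t"
    and bc: "\<forall>\<epsilon> t. 0 < \<epsilon> \<and> \<epsilon> \<le> eps0 \<and> 0 \<le> t \<longrightarrow> v \<epsilon> 0 t = 0 \<and> v \<epsilon> 1 t = 0"
    and limits_smooth: "smooth2 v2" "smooth2 u2" "smooth2 g"
    and limits_bounded: "bounded_derivs v2" "bounded_derivs u2" "bounded_derivs g"
    and A1_v: "\<forall>\<epsilon> x t. 0 < \<epsilon> \<and> \<epsilon> \<le> eps0 \<and> 0 \<le> t \<longrightarrow>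
                 \<bar>v \<epsilon> x t - \<epsilon>\<^sup>2 * v2 x t\<bar> \<le> K * \<epsilon> ^ 3 \<and>
                 \<bar>px (v \<epsilon>) x t - \<epsilon>\<^sup>2 * px v2 x t\<bar> \<le> K * \<epsilon> ^ 3 \<and>
                 \<bar>pt (v \<epsilon>) x t - \<epsilon>\<^sup>2 * pt v2 x t\<bar> \<le> K * \<epsilon> ^ 3"
    and A1_u: "\<forall>\<epsilon> x t. 0 < \<epsilon> \<and> \<epsilon> \<le> eps0 \<and> 0 \<le> t \<longrightarrow>
                 \<bar>px (u \<epsilon>) x t - \<epsilon>\<^sup>2 * px u2 x t\<bar> \<le> K * \<epsilon> ^ 3 \<and>
                 \<bar>px (px (u \<epsilon>)) x t - \<epsilon>\<^sup>2 * px (px u2) x t\<bar> \<le> K * \<epsilon> ^ 3 \<and>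
                 \<bar>pt (px (u \<epsilon>)) x t - \<epsilon>\<^sup>2 * pt (px u2) x t\<bar> \<le> K * \<epsilon> ^ 3"
  shows "\<exists>C. \<forall>\<epsilon> dx dt (N::nat) (n::nat) vh.
           0 < \<epsilon> \<and> \<epsilon> \<le> eps0 \<and> 1 \<le> N \<and> dx = 1 / real N \<and> dt = CFL * dx \<and> \<epsilon> \<le> dt \<and>
           vh \<in> Vh N \<and>
           (\<forall>\<phi>\<in>Vh N. aform \<epsilon> dt vh \<phi> = iota_h \<epsilon> dt dx (v \<epsilon>) (u \<epsilon>) g (real n * dt) \<phi>)
           \<longrightarrow> L2norm01 (\<lambda>x. uh \<epsilon> dt dx (v \<epsilon>) (u \<epsilon>) g (real n * dt) vh x
                               - u \<epsilon> x (real (Suc n) * dt))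
               \<le> C * (dt\<^sup>2 + \<epsilon> ^ 4 / dx\<^sup>2 + \<epsilon>\<^sup>2)"
proof -
  have "\<forall>f\<in>set [v2, u2, g]. bounded_derivs f" using limits_bounded by simp
  then obtain M where M: "0 \<le> M" and bounds: "\<forall>f\<in>set [v2, u2, g].
      \<forall>ds\<in>set [[True], [True, True], [False, True], [False]]. \<forall>x t. 0 \<le> t \<longrightarrow> \<bar>pd ds f x t\<bar> \<le> M"
    using bounded_derivs_uniform[where dss = "[[True], [True, True], [False, True], [False]]"]
    by blast
  have "0 \<le> K * eps0 ^ 3"
    using A1_v eps0 abs_ge_zero order_trans by (metis order_refl)
  then have K: "0 \<le> K" using eps0 by (simp add: zero_le_mult_iff)
  show ?thesis
  proof (intro exI[of _ "sqrt (scheme_step.Cf K M CFL eps0)"] allI impI)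
    fix \<epsilon> dx dt :: real and N n :: nat and vh :: "real \<Rightarrow> real"
    assume H: "0 < \<epsilon> \<and> \<epsilon> \<le> eps0 \<and> 1 \<le> N \<and> dx = 1 / real N \<and> dt = CFL * dx \<and> \<epsilon> \<le> dt \<and>
      vh \<in> Vh N \<and> (\<forall>\<phi>\<in>Vh N. aform \<epsilon> dt vh \<phi> = iota_h \<epsilon> dt dx (v \<epsilon>) (u \<epsilon>) g (real n * dt) \<phi>)"
    then interpret scheme_step \<epsilon> dx dt "real n * dt" K M CFL eps0 N "v \<epsilon>" "u \<epsilon>" g v2 u2
      using eps0 CFL smooth pde bc limits_smooth K M bounds A1_v A1_u
      by unfold_locales (auto simp: diff_eq_eq add.commute)
    have Suc_dt: "real (Suc n) * dt = real n * dt + dt" by (simp add: algebra_simps)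
    have "L2norm01 (\<lambda>x. uh \<epsilon> dt dx (v \<epsilon>) (u \<epsilon>) g (real n * dt) vh x - u \<epsilon> x (real (Suc n) * dt))
        \<le> sqrt Cf * dt\<^sup>2"
      unfolding Suc_dt using H by (intro step_error) auto
    also have "\<dots> \<le> sqrt Cf * (dt\<^sup>2 + \<epsilon> ^ 4 / dx\<^sup>2 + \<epsilon>\<^sup>2)"
      by (intro mult_left_mono) (auto simp: Cf_def)
    finally show "L2norm01 (\<lambda>x. uh \<epsilon> dt dx (v \<epsilon>) (u \<epsilon>) g (real n * dt) vh x
        - u \<epsilon> x (real (Suc n) * dt)) \<le> sqrt Cf * (dt\<^sup>2 + \<epsilon> ^ 4 / dx\<^sup>2 + \<epsilon>\<^sup>2)" .
  qed
qed

end
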